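(* Fix $T>0$, $x_0\in\mathbb R$, $L>0$, $L_1>0$, $q\ge1$, $H\in(\frac12,1)$ and an integer $k\ge1$. Let $G$ satisfy (A2) and (A3), and let $\varphi_\epsilon=\epsilon^{1/(k-H+2)}$. For each $\theta\in\Theta_{k+1}(L)$ and $\epsilon>0$ let $X$ solve the SDE below and let $\widehat{\theta}_tX_t$ be the kernel estimator below. Then for any $0<a\le b<T$, $$\limsup_{\epsilon\to0}\ \sup_{\theta\in\Theta_{k+1}(L)}\ \sup_{a\le t\le b}E_\theta\big[|\widehat{\theta}_tX_t-\theta(t)x_t|^2\big]\,\epsilon^{-\min\left(2,\frac{2(k+1)}{k+2-H}\right)}<\infty .$$
   Context: Hermite process: let $W=\{W(h),h\in L^2(\mathbb R)\}$ be a centered Gaussian family with $E[W(h)W(g)]=\langle h,g\rangle_{L^2(\mathbb R)}$; for an integer $q\ge1$ and $H\in(\frac12,1)$ set $H_0=1+\frac{H-1}{q}$, $c(q,H)=\sqrt{H(2H-1)/(q!\,\beta(H_0-\frac12,2-2H_0)^q)}$ and $Z^{q,H}_t=c(q,H)\int_{\mathbb R^q}\big(\int_0^t\prod_{j=1}^q(s-\psi_j)_+^{H_0-3/2}ds\big)dW_{\psi_1}\cdots dW_{\psi_q}$ (multiple Wiener–Itô integral; continuous version used). It is centered, $H$-self-similar, has stationary increments and covariance $\frac12(t^{2H}+s^{2H}-|t-s|^{2H})$. For deterministic $f$ with $\int\int|f(u)f(v)||u-v|^{2H-2}dudv<\infty$ the Wiener integral is $\int_{\mathbb R}f\,dZ^{q,H}=c(q,H)\int_{\mathbb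 R^q}\big(\int_{\mathbb R}f(u)\prod_{j=1}^q(u-\psi_j)_+^{H_0-3/2}du\big)dW_{\psi_1}\cdots dW_{\psi_q}$ (and $\int_0^T f\,dZ^{q,H}:=\int_{\mathbb R}f1_{[0,T]}dZ^{q,H}$); it has mean $0$ and $E[\int f dZ^{q,H}\int g dZ^{q,H}]=H(2H-1)\int\int f(u)g(v)|u-v|^{2H-2}dudv$. Model: for $\theta:[0,T]\to\mathbb R$ and $\epsilon>0$, $X$ is the pathwise solution of $X_t=x_0+\int_0^t\theta(s)X_sds+\epsilon Z^{q,H}_t$, $0\le t\le T$ (i.e. $dX_t=\theta(t)X_tdt+\epsilon dZ^{q,H}_t$), and $x_t=x_0\exp(\int_0^t\theta(s)ds)$; $E_\theta$ denotes expectation when $\theta$ is the true multiplier. Classes: for an integer $m\ge0$, $\Theta_m(L)$ is the set of functions $\theta$ with $|\theta(t)|\le L$ for all $t$ (condition (A1)), $m$ times differentiable, with $|\theta^{(m)}(x)-\theta^{(m)}(y)|\le L_1|x-y|$ for all $x,y$. Kernel: $G$ is a bounded measurable function with compact support $[A,B]$, $A<0<B$, satisfying (A2): $\int_A^BG(u)du=1$, and (A3): $\int_{-\infty}^{\infty}u^jG(u)du=0$ for $j=1,\dots,k$. Estimator: $\widehat{\theta}_tX_t:=\frac1{\varphi_\epsilon}\int_0^TG\big(\frac{\tau-t}{\varphi_\epsilon}\big)dX_\tau=\frac1{\varphi_\epsilon}\int_0^TG\big(\frac{\tau-t}{\varphi_\epsilon}\big)\theta(\tau)X_\tau d\tau+\frac{\epsilon}{\varphi_\epsilon}\int_0^TG\big(\frac{\tau-t}{\varphi_\epsilon}\big)dZ^{q,H}_\tau$.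 *)

theory Defs
  imports "HOL-Probability.Probability"
begin

definition Theta_class :: "real \<Rightarrow> nat \<Rightarrow> real \<Rightarrow> real \<Rightarrow> (real \<Rightarrow> real) set" where
  "Theta_class T m L L1 = {\<theta>. (\<forall>t\<in>{0..T}. \<bar>\<theta> t\<bar> \<le> L) \<and>
     (\<exists>D :: nat \<Rightarrow> real \<Rightarrow> real.
        (\<forall>t\<in>{0..T}. D 0 t = \<theta> t) \<and>
        (\<forall>j<m. \<forall>t\<in>{0..T}. (D j has_real_derivative D (Suc j) t) (at t within {0..T})) \<and>
        (\<forall>x\<in>{0..T}. \<forall>y\<in>{0..T}. \<bar>D m x - D m y\<bar> \<le> L1 * \<bar>x - y\<bar>))}"

definition kernel_ok :: "nat \<Rightarrow> (real \<Rightarrow> real) \<Rightarrow> bool" where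
  "kernel_ok k G \<longleftrightarrow> G \<in> borel_measurable borel \<and> (\<exists>K. \<forall>u. \<bar>G u\<bar> \<le> K) \<and>
     (\<exists>A B. A < 0 \<and> 0 < B \<and> (\<forall>u. u \<notin> {A..B} \<longrightarrow> G u = 0) \<and>
        (LINT u|lborel. G u) = 1 \<and>
        (\<forall>j\<in>{1..k}. (LINT u|lborel. u ^ j * G u) = 0))"

definition wiener_admissible :: "real \<Rightarrow> (real \<Rightarrow> real) \<Rightarrow> bool" where
  "wiener_admissible H f \<longleftrightarrow> f \<in> borel_measurable borel \<and>
     (\<integral>\<^sup>+ p. ennreal (\<bar>f (fst p) * f (snd p)\<bar> * \<bar>fst p - snd p\<bar> powr (2*H - 2)) \<partial>(lborel \<Otimes>\<^sub>M lborel)) < \<infinity>"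

text \<open>Properties of a (continuous version of a) Hermite process Z with Hurst index H on the
  probability space M, together with its Wiener integral operator WI (WI f = \<integral> f dZ),
  as listed in the context: centred, covariance (t^2H+s^2H-|t-s|^2H)/2, continuous paths,
  and WI f centred with covariance H(2H-1) \<integral>\<integral> f(u)g(v)|u-v|^(2H-2), linear, and
  WI(1_[0,t]) = Z_t.\<close>
definition hermite_setting ::
  "'a measure \<Rightarrow> real \<Rightarrow> (real \<Rightarrow> 'a \<Rightarrow> real) \<Rightarrow> ((real \<Rightarrow> real) \<Rightarrow> 'a \<Rightarrow> real) \<Rightarrow> bool" where
  "hermite_setting M H Z WI \<longleftrightarrow> prob_space M \<and>
     (\<forall>t\<ge>0. Z t \<in> borel_measurable M \<and> integrable M (\<lambda>\<omega>. (Z t \<omega>)\<^sup>2) \<and>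
             (\<integral>\<omega>. Z t \<omega> \<partial>M) = 0) \<and>
     (\<forall>s\<ge>0. \<forall>t\<ge>0. (\<integral>\<omega>. Z s \<omega> * Z t \<omega> \<partial>M) =
             (t powr (2*H) + s powr (2*H) - \<bar>t - s\<bar> powr (2*H)) / 2) \<and>
     (\<forall>\<omega>\<in>space M. continuous_on {0..} (\<lambda>t. Z t \<omega>)) \<and>
     (\<forall>f. wiener_admissible H f \<longrightarrow>
         WI f \<in> borel_measurable M \<and> integrable M (\<lambda>\<omega>. (WI f \<omega>)\<^sup>2) \<and>
         (\<integral>\<omega>. WI f \<omega> \<partial>M) = 0) \<and>
     (\<forall>f g. wiener_admissible H f \<longrightarrow> wiener_admissible H g \<longrightarrow>
         (\<integral>\<omega>. WI f \<omega> * WI g \<omega> \<partial>M) =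
           H * (2*H - 1) * (\<integral>p. f (fst p) * g (snd p) * \<bar>fst p - snd p\<bar> powr (2*H - 2)
                              \<partial>(lborel \<Otimes>\<^sub>M lborel))) \<and>
     (\<forall>f g a b. wiener_admissible H f \<longrightarrow> wiener_admissible H g \<longrightarrow>
         (AE \<omega> in M. WI (\<lambda>u. a * f u + b * g u) \<omega> = a * WI f \<omega> + b * WI g \<omega>)) \<and>
     (\<forall>t\<ge>0. AE \<omega> in M. WI (indicator {0..t}) \<omega> = Z t \<omega>)"

definition solves_sde ::
  "'a measure \<Rightarrow> real \<Rightarrow> real \<Rightarrow> real \<Rightarrow> (real \<Rightarrow> real) \<Rightarrow> (real \<Rightarrow> 'a \<Rightarrow> real) \<Rightarrow> (real \<Rightarrow> 'a \<Rightarrow> real) \<Rightarrow> bool" where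
  "solves_sde M T x0 \<epsilon> \<theta> Z X \<longleftrightarrow>
     (\<forall>\<omega>\<in>space M. continuous_on {0..T} (\<lambda>s. X s \<omega>) \<and>
        (\<forall>t\<in>{0..T}. X t \<omega> = x0 + integral {0..t} (\<lambda>s. \<theta> s * X s \<omega>) + \<epsilon> * Z t \<omega>))"

definition det_sol :: "real \<Rightarrow> (real \<Rightarrow> real) \<Rightarrow> real \<Rightarrow> real" where
  "det_sol x0 \<theta> t = x0 * exp (integral {0..t} \<theta>)"

definition kernel_est ::
  "(real \<Rightarrow> real) \<Rightarrow> real \<Rightarrow> real \<Rightarrow> real \<Rightarrow> (real \<Rightarrow> real) \<Rightarrow> (real \<Rightarrow> 'a \<Rightarrow> real)
    \<Rightarrow> ((real \<Rightarrow> real) \<Rightarrow> 'a \<Rightarrow> real) \<Rightarrow> real \<Rightarrow> 'a \<Rightarrow> real" where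
  "kernel_est G \<phi> T \<epsilon> \<theta> X WI t \<omega> =
     (1 / \<phi>) * integral {0..T} (\<lambda>\<tau>. G ((\<tau> - t) / \<phi>) * \<theta> \<tau> * X \<tau> \<omega>)
     + (\<epsilon> / \<phi>) * WI (\<lambda>\<tau>. G ((\<tau> - t) / \<phi>) * indicator {0..T} \<tau>) \<omega>"

end

theory Submission
  imports Defs
begin

text \<open>
  The error of the estimator splits into the bias of the kernel smoother applied to \<open>\<theta> x\<close>, the
  error \<open>R\<close> made by smoothing \<open>\<theta> X\<close> instead of \<open>\<theta> x\<close>, and the smoothed noise
  \<open>N = (\<epsilon>/\<phi>) \<integral> G((\<tau> - t)/\<phi>) dZ\<^sub>\<tau>\<close>.
  Because \<open>G\<close> has vanishing moments up to order \<open>k\<close>, only the Taylor remainder of \<open>\<theta> x\<close> enters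
  the bias, which is therefore \<open>O(\<phi>\<^bsup>k+1\<^esup>)\<close>; this is uniform over \<open>\<Theta>\<^sub>k\<^sub>+\<^sub>1(L)\<close> because a bound
  on \<open>\<theta>\<close> and a Lipschitz bound on \<open>\<theta>\<^bsup>(k+1)\<^esup>\<close> already bound all intermediate derivatives.
  Variation of constants bounds \<open>X - x\<close> pathwise by \<open>\<epsilon>\<close> times an integral of \<open>|Z|\<close>, so
  \<open>E R\<^sup>2 = O(\<epsilon>\<^sup>2)\<close> by Cauchy-Schwarz and Tonelli. The covariance of the Wiener integral and the
  support \<open>t + \<phi> [A, B]\<close> of the kernel give \<open>E N\<^sup>2 = O(\<epsilon>\<^sup>2 \<phi>\<^bsup>2H-2\<^esup>)\<close>. The bandwidth
  \<open>\<phi> = \<epsilon>\<^bsup>1/(k-H+2)\<^esup>\<close> balances the squared bias against \<open>E N\<^sup>2\<close>: both become \<open>\<epsilon>\<^sup>r\<close> with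
  \<open>r = 2(k+1)/(k+2-H) \<le> 2\<close>.
\<close>

section \<open>Uniform bounds on the derivatives in \<open>\<Theta>\<^sub>m(L)\<close>\<close>

definition successive_derivs :: "nat \<Rightarrow> (nat \<Rightarrow> real \<Rightarrow> real) \<Rightarrow> real set \<Rightarrow> bool" where
  "successive_derivs m D S \<longleftrightarrow>
     (\<forall>j<m. \<forall>t\<in>S. (D j has_real_derivative D (Suc j) t) (at t within S))"

lemma successive_derivsD:
  "successive_derivs m D S \<Longrightarrow> j < m \<Longrightarrow> t \<in> S \<Longrightarrow>
     (D j has_real_derivative D (Suc j) t) (at t within S)"
  unfolding successive_derivs_def by blast

lemma successive_derivs_mono:
  "successive_derivs m D S \<Longrightarrow> n \<le> m \<Longrightarrow> successive_derivs n D S"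
  unfolding successive_derivs_def by auto

lemma successive_derivs_shift:
  "successive_derivs (Suc m) D S \<Longrightarrow> successive_derivs m (\<lambda>j. D (Suc j)) S"
  unfolding successive_derivs_def by simp

primrec forward_diff :: "real \<Rightarrow> nat \<Rightarrow> (real \<Rightarrow> real) \<Rightarrow> real \<Rightarrow> real" where
  "forward_diff h 0 g t = g t"
| "forward_diff h (Suc n) g t = forward_diff h n (\<lambda>s. g (s + h) - g s) t"

lemma abs_forward_diff_le:
  assumes "h > 0" and "\<And>s. s \<in> {a..a + real n * h} \<Longrightarrow> \<bar>g s\<bar> \<le> B"
  shows "\<bar>forward_diff h n g a\<bar> \<le> 2 ^ n * B"
  using assms(2)
proof (induction n arbitrary: g B)
  case 0
  then show ?case by simp
next
  case (Suc n)
  have "\<bar>g (s + h) - g s\<bar> \<le> 2 * B" if "s \<in> {a..a + real n * h}" for s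
    using Suc.prems[of s] Suc.prems[of "s + h"] that \<open>h > 0\<close>
    by (fastforce simp: algebra_simps)
  then have "\<bar>forward_diff h n (\<lambda>s. g (s + h) - g s) a\<bar> \<le> 2 ^ n * (2 * B)"
    by (rule Suc.IH)
  then show ?case by (simp add: algebra_simps)
qed

lemma forward_diff_mean_value:
  assumes "h > 0" and "successive_derivs n D {lo..hi}" and "lo \<le> a" and "a + real n * h \<le> hi"
  shows "\<exists>\<xi>\<in>{a..a + real n * h}. forward_diff h n (D 0) a = h ^ n * D n \<xi>"
  using assms(2-4)
proof (induction n arbitrary: D hi)
  case 0
  then show ?case by auto
next
  case (Suc n)
  define D' where "D' = (\<lambda>j s. D j (s + h) - D j s)"
  have "successive_derivs n D' {lo..hi - h}"
    unfolding successive_derivs_def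
  proof (intro allI impI ballI)
    fix j t assume j: "j < n" and t: "t \<in> {lo..hi - h}"
    have sub: "{lo..hi - h} \<subseteq> {lo..hi}" and shift: "(\<lambda>s. s + h) ` {lo..hi - h} \<subseteq> {lo..hi}"
      using \<open>h > 0\<close> by auto
    have "(D j has_real_derivative D (Suc j) (t + h)) (at (t + h) within {lo..hi})"
      using successive_derivsD[OF Suc.prems(1)] j t \<open>h > 0\<close> by simp
    then have "(D j has_real_derivative D (Suc j) (t + h)) (at (t + h) within (\<lambda>s. s + h) ` {lo..hi - h})"
      by (rule DERIV_subset[OF _ shift])
    moreover have "((\<lambda>s. s + h) has_real_derivative 1) (at t within {lo..hi - h})"
      by (auto intro!: derivative_eq_intros)
    ultimately have "((\<lambda>s. D j (s + h)) has_real_derivative D (Suc j) (t + h)) (at t within {lo..hi - h})"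
      using DERIV_image_chain[of "D j" _ "\<lambda>s. s + h" t "{lo..hi - h}" 1] by (simp add: o_def)
    moreover have "(D j has_real_derivative D (Suc j) t) (at t within {lo..hi - h})"
      using successive_derivsD[OF Suc.prems(1)] j t sub by (meson DERIV_subset less_SucI subsetD)
    ultimately show "(D' j has_real_derivative D' (Suc j) t) (at t within {lo..hi - h})"
      unfolding D'_def by (rule DERIV_diff)
  qed
  moreover have "a + real n * h \<le> hi - h" using Suc.prems(3) by (simp add: algebra_simps)
  ultimately obtain \<xi> where \<xi>: "\<xi> \<in> {a..a + real n * h}"
    and eq: "forward_diff h n (D' 0) a = h ^ n * D' n \<xi>"
    using Suc.IH Suc.prems(2) by blast
  have sub: "{\<xi>..\<xi> + h} \<subseteq> {lo..hi}" using \<xi> Suc.prems(2,3) by (auto simp: algebra_simps)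
  have "\<exists>z\<in>{\<xi>..\<xi> + h}. D n (\<xi> + h) - D n \<xi> = (\<lambda>y. y * D (Suc n) z) (\<xi> + h - \<xi>)"
  proof (rule mvt_very_simple)
    fix x assume "\<xi> \<le> x" "x \<le> \<xi> + h"
    then have "(D n has_real_derivative D (Suc n) x) (at x within {\<xi>..\<xi> + h})"
      using successive_derivsD[OF Suc.prems(1), of n x] sub by (auto intro: DERIV_subset)
    then show "(D n has_derivative (\<lambda>y. y * D (Suc n) x)) (at x within {\<xi>..\<xi> + h})"
      by (simp add: has_field_derivative_def mult.commute[of _ "D (Suc n) x"])
  qed (use \<open>h > 0\<close> in simp)
  then obtain z where z: "z \<in> {\<xi>..\<xi> + h}" and zeq: "D n (\<xi> + h) - D n \<xi> = h * D (Suc n) z"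
    by auto
  have "forward_diff h (Suc n) (D 0) a = h ^ Suc n * D (Suc n) z"
    using eq zeq by (simp add: D'_def)
  moreover have "z \<in> {a..a + real (Suc n) * h}" using z \<xi> by (auto simp: algebra_simps)
  ultimately show ?case by blast
qed

text \<open>The \<open>j\<close>-th forward difference of \<open>D 0\<close> with step \<open>T/m\<close> is at most \<open>2\<^sup>j L\<close> in absolute
  value and, by the mean value theorem, equals \<open>(T/m)\<^sup>j\<close> times a value of \<open>D j\<close>.\<close>
lemma successive_derivs_small_somewhere:
  assumes "T > 0" and "j \<le> m" and "m \<ge> 1" and "L \<ge> 0"
    and "\<forall>t\<in>{0..T}. \<bar>D 0 t\<bar> \<le> L" and "successive_derivs m D {0..T}"
  shows "\<exists>\<xi>\<in>{0..T}. \<bar>D j \<xi>\<bar> \<le> (max 1 (2 * real m / T)) ^ m * L"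
proof -
  define h where "h = T / real m"
  have h: "h > 0" using assms(1,3) by (simp add: h_def)
  have "real j * h \<le> real m * h" using assms(2) h by (intro mult_right_mono) auto
  also have "\<dots> = T" using assms(3) by (simp add: h_def)
  finally have jh: "0 + real j * h \<le> T" by simp
  obtain \<xi> where \<xi>: "\<xi> \<in> {0..0 + real j * h}" and eq: "forward_diff h j (D 0) 0 = h ^ j * D j \<xi>"
    using forward_diff_mean_value[OF h successive_derivs_mono[OF assms(6,2)] _ jh] by auto
  have "\<bar>forward_diff h j (D 0) 0\<bar> \<le> 2 ^ j * L"
    using abs_forward_diff_le[OF h, of 0 j "D 0" L] assms(5) jh by auto
  then have "\<bar>D j \<xi>\<bar> \<le> (2 / h) ^ j * L"
    using eq h by (simp add: abs_mult field_simps power_divide)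
  also have "\<dots> \<le> (max 1 (2 / h)) ^ j * L"
    by (intro mult_right_mono power_mono assms(4)) (use h in auto)
  also have "\<dots> \<le> (max 1 (2 / h)) ^ m * L"
    by (intro mult_right_mono power_increasing assms(2,4)) auto
  finally show ?thesis using \<xi> jh by (intro bexI[of _ \<xi>]) (auto simp: h_def)
qed

lemma abs_le_of_lipschitz_on_Icc:
  fixes f :: "real \<Rightarrow> real"
  assumes "\<And>x y. x \<in> {0..T} \<Longrightarrow> y \<in> {0..T} \<Longrightarrow> \<bar>f x - f y\<bar> \<le> M * \<bar>x - y\<bar>" and "M \<ge> 0"
    and "\<xi> \<in> {0..T}" and "\<bar>f \<xi>\<bar> \<le> c" and "t \<in> {0..T}"
  shows "\<bar>f t\<bar> \<le> c + M * T"
proof -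
  have "\<bar>f t - f \<xi>\<bar> \<le> M * \<bar>t - \<xi>\<bar>" using assms(1,3,5) by blast
  also have "\<dots> \<le> M * T" using assms(2,3,5) by (intro mult_left_mono) auto
  finally show ?thesis using assms(4) by simp
qed

text \<open>Descending induction on \<open>j\<close>: a function that is small somewhere and has a bounded
  derivative (for \<open>j = m\<close>: is Lipschitz) is bounded on \<open>[0, T]\<close>.\<close>
lemma successive_derivs_uniform_bound:
  assumes "T > 0" and "m \<ge> 1" and "L \<ge> 0" and "L1 \<ge> 0"
  shows "\<exists>M. \<forall>D. (\<forall>t\<in>{0..T}. \<bar>D 0 t\<bar> \<le> L) \<longrightarrow> successive_derivs m D {0..T} \<longrightarrow>
     (\<forall>x\<in>{0..T}. \<forall>y\<in>{0..T}. \<bar>D m x - D m y\<bar> \<le> L1 * \<bar>x - y\<bar>) \<longrightarrow>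
     (\<forall>j\<le>m. \<forall>t\<in>{0..T}. \<bar>D j t\<bar> \<le> M)"
proof -
  define c where "c = (max 1 (2 * real m / T)) ^ m * L"
  have small: "\<exists>\<xi>\<in>{0..T}. \<bar>D j \<xi>\<bar> \<le> c"
    if "j \<le> m" "\<forall>t\<in>{0..T}. \<bar>D 0 t\<bar> \<le> L" "successive_derivs m D {0..T}" for D j
    using successive_derivs_small_somewhere[OF assms(1) that(1) assms(2,3) that(2,3)] by (simp add: c_def)
  have "\<exists>M\<ge>0. \<forall>D. (\<forall>t\<in>{0..T}. \<bar>D 0 t\<bar> \<le> L) \<longrightarrow> successive_derivs m D {0..T} \<longrightarrow>
     (\<forall>x\<in>{0..T}. \<forall>y\<in>{0..T}. \<bar>D m x - D m y\<bar> \<le> L1 * \<bar>x - y\<bar>) \<longrightarrow>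
     (\<forall>j. m - d \<le> j \<and> j \<le> m \<longrightarrow> (\<forall>t\<in>{0..T}. \<bar>D j t\<bar> \<le> M))" for d
  proof (induction d)
    case 0
    show ?case
    proof (intro exI[of _ "c + L1 * T"] conjI allI impI ballI)
      fix D j t
      assume D0: "\<forall>t\<in>{0..T}. \<bar>D 0 t\<bar> \<le> L" and D: "successive_derivs m D {0..T}"
        and lip: "\<forall>x\<in>{0..T}. \<forall>y\<in>{0..T}. \<bar>D m x - D m y\<bar> \<le> L1 * \<bar>x - y\<bar>"
        and j: "m - 0 \<le> j \<and> j \<le> m" and t: "t \<in> {0..T}"
      obtain \<xi> where "\<xi> \<in> {0..T}" "\<bar>D m \<xi>\<bar> \<le> c" using small[OF order_refl D0 D] by blast
      then have "\<bar>D m t\<bar> \<le> c + L1 * T"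
        using abs_le_of_lipschitz_on_Icc[of T "D m" L1] lip assms(4) t by blast
      moreover have "j = m" using j by simp
      ultimately show "\<bar>D j t\<bar> \<le> c + L1 * T" by simp
    qed (use assms in \<open>simp add: c_def\<close>)
  next
    case (Suc d)
    then obtain M where M: "M \<ge> 0" and IH: "\<forall>D. (\<forall>t\<in>{0..T}. \<bar>D 0 t\<bar> \<le> L) \<longrightarrow>
      successive_derivs m D {0..T} \<longrightarrow>
      (\<forall>x\<in>{0..T}. \<forall>y\<in>{0..T}. \<bar>D m x - D m y\<bar> \<le> L1 * \<bar>x - y\<bar>) \<longrightarrow>
      (\<forall>j. m - d \<le> j \<and> j \<le> m \<longrightarrow> (\<forall>t\<in>{0..T}. \<bar>D j t\<bar> \<le> M))" by blast
    show ?case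
    proof (intro exI[of _ "max M (c + M * T)"] conjI allI impI ballI)
      fix D j t
      assume D0: "\<forall>t\<in>{0..T}. \<bar>D 0 t\<bar> \<le> L" and D: "successive_derivs m D {0..T}"
        and lip: "\<forall>x\<in>{0..T}. \<forall>y\<in>{0..T}. \<bar>D m x - D m y\<bar> \<le> L1 * \<bar>x - y\<bar>"
        and j: "m - Suc d \<le> j \<and> j \<le> m" and t: "t \<in> {0..T}"
      have bound: "\<forall>j. m - d \<le> j \<and> j \<le> m \<longrightarrow> (\<forall>t\<in>{0..T}. \<bar>D j t\<bar> \<le> M)"
        using IH D0 D lip by blast
      show "\<bar>D j t\<bar> \<le> max M (c + M * T)"
      proof (cases "m - d \<le> j")
        case False
        then have j': "j < m" "m - d \<le> Suc j" using j by auto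
        obtain \<xi> where "\<xi> \<in> {0..T}" "\<bar>D j \<xi>\<bar> \<le> c" using small[OF _ D0 D, of j] j' by auto
        moreover have "\<bar>D j x - D j y\<bar> \<le> M * \<bar>x - y\<bar>" if "x \<in> {0..T}" "y \<in> {0..T}" for x y
          using field_differentiable_bound[of "{0..T}" "D j" "D (Suc j)" M x y]
            successive_derivsD[OF D j'(1)] bound j' that by auto
        ultimately show ?thesis using abs_le_of_lipschitz_on_Icc[of T "D j" M] M t by fastforce
      next
        case True
        then have "\<bar>D j t\<bar> \<le> M" using bound j t by blast
        then show ?thesis by simp
      qed
    qed (use M in simp)
  qed
  from this[of m] show ?thesis by auto
qed

lemma Theta_classE:
  assumes "\<theta> \<in> Theta_class T m L L1"
  obtains D where "\<forall>t\<in>{0..T}. D 0 t = \<theta> t" and "successive_derivs m D {0..T}"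
    and "\<forall>x\<in>{0..T}. \<forall>y\<in>{0..T}. \<bar>D m x - D m y\<bar> \<le> L1 * \<bar>x - y\<bar>"
  using assms unfolding Theta_class_def successive_derivs_def by blast

lemma Theta_class_bounded: "\<theta> \<in> Theta_class T m L L1 \<Longrightarrow> t \<in> {0..T} \<Longrightarrow> \<bar>\<theta> t\<bar> \<le> L"
  unfolding Theta_class_def by blast

lemma Theta_class_continuous_on:
  assumes "\<theta> \<in> Theta_class T m L L1"
  shows "continuous_on {0..T} \<theta>"
proof -
  obtain D where D0: "\<forall>t\<in>{0..T}. D 0 t = \<theta> t" and D: "successive_derivs m D {0..T}"
    and lip: "\<forall>x\<in>{0..T}. \<forall>y\<in>{0..T}. \<bar>D m x - D m y\<bar> \<le> L1 * \<bar>x - y\<bar>"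
    using Theta_classE[OF assms] .
  have "continuous_on {0..T} (D 0)"
  proof (cases m)
    case 0
    have "lipschitz_on (max L1 0) {0..T} (D 0)"
    proof (rule lipschitz_onI)
      fix x y assume "x \<in> {0..T}" "y \<in> {0..T}"
      then have "\<bar>D 0 x - D 0 y\<bar> \<le> L1 * \<bar>x - y\<bar>" using lip 0 by simp
      also have "\<dots> \<le> max L1 0 * \<bar>x - y\<bar>" by (intro mult_right_mono) auto
      finally show "dist (D 0 x) (D 0 y) \<le> max L1 0 * dist x y" by (simp add: dist_real_def)
    qed simp
    then show ?thesis by (rule lipschitz_on_continuous_on)
  next
    case (Suc m')
    then show ?thesis
      using successive_derivsD[OF D, of 0] by (intro DERIV_continuous_on[of _ _ "D (Suc 0)"]) auto
  qed
  then show ?thesis using D0 continuous_on_cong by fastforce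
qed

lemma Theta_class_uniform_derivs:
  assumes "T > 0" and "m \<ge> 1" and "L \<ge> 0" and "L1 \<ge> 0"
  shows "\<exists>M. \<forall>\<theta>\<in>Theta_class T m L L1. \<exists>D. (\<forall>t\<in>{0..T}. D 0 t = \<theta> t) \<and>
            successive_derivs m D {0..T} \<and> (\<forall>j\<le>m. \<forall>t\<in>{0..T}. \<bar>D j t\<bar> \<le> M)"
proof -
  obtain M where M: "\<forall>D. (\<forall>t\<in>{0..T}. \<bar>D 0 t\<bar> \<le> L) \<longrightarrow> successive_derivs m D {0..T} \<longrightarrow>
     (\<forall>x\<in>{0..T}. \<forall>y\<in>{0..T}. \<bar>D m x - D m y\<bar> \<le> L1 * \<bar>x - y\<bar>) \<longrightarrow>
     (\<forall>j\<le>m. \<forall>t\<in>{0..T}. \<bar>D j t\<bar> \<le> M)"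
    using successive_derivs_uniform_bound[OF assms] by blast
  have "\<exists>D. (\<forall>t\<in>{0..T}. D 0 t = \<theta> t) \<and> successive_derivs m D {0..T} \<and>
          (\<forall>j\<le>m. \<forall>t\<in>{0..T}. \<bar>D j t\<bar> \<le> M)" if \<theta>: "\<theta> \<in> Theta_class T m L L1" for \<theta>
  proof -
    obtain D where D0: "\<forall>t\<in>{0..T}. D 0 t = \<theta> t" and D: "successive_derivs m D {0..T}"
      and lip: "\<forall>x\<in>{0..T}. \<forall>y\<in>{0..T}. \<bar>D m x - D m y\<bar> \<le> L1 * \<bar>x - y\<bar>"
      using Theta_classE[OF \<theta>] .
    have "\<forall>t\<in>{0..T}. \<bar>D 0 t\<bar> \<le> L" using D0 Theta_class_bounded[OF \<theta>] by simp
    then show ?thesis using M D0 D lip by blast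
  qed
  then show ?thesis by blast
qed

section \<open>Derivatives of solutions of linear equations\<close>

text \<open>If \<open>x' = a x\<close> and \<open>D j\<close> is the \<open>j\<close>-th derivative of \<open>a\<close>, the general Leibniz rule applied
  to \<open>x\<^bsup>(n+1)\<^esup> = (a x)\<^bsup>(n)\<^esup>\<close> expresses every derivative of \<open>x\<close> through \<open>x\<close> and the \<open>D j\<close>.\<close>
fun linear_ode_deriv :: "(nat \<Rightarrow> real \<Rightarrow> real) \<Rightarrow> (real \<Rightarrow> real) \<Rightarrow> nat \<Rightarrow> real \<Rightarrow> real" where
  "linear_ode_deriv D x 0 t = x t"
| "linear_ode_deriv D x (Suc n) t =
     (\<Sum>i\<le>n. real (n choose i) * D i t * linear_ode_deriv D x (n - i) t)"

lemma leibniz_sum_Suc: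
  fixes a b :: "nat \<Rightarrow> real"
  shows "(\<Sum>i\<le>j. real (j choose i) * (a (Suc i) * b (j - i) + a i * b (Suc (j - i))))
       = (\<Sum>i\<le>Suc j. real (Suc j choose i) * a i * b (Suc j - i))"
proof -
  have R: "(\<Sum>i\<le>Suc j. real (Suc j choose i) * a i * b (Suc j - i))
     = a 0 * b (Suc j) + (\<Sum>i\<le>j. real (j choose i) * a (Suc i) * b (j - i))
        + (\<Sum>i\<le>j. real (j choose Suc i) * a (Suc i) * b (j - i))"
    by (subst sum.atMost_Suc_shift) (simp add: sum.distrib[symmetric] algebra_simps)
  have "(\<Sum>i\<le>j. real (j choose i) * a i * b (Suc (j - i)))
        = (\<Sum>i<Suc j. real (j choose i) * a i * b (Suc (j - i)))"
    by (simp add: lessThan_Suc_atMost)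
  also have "\<dots> = a 0 * b (Suc j) + (\<Sum>i<j. real (j choose Suc i) * a (Suc i) * b (Suc (j - Suc i)))"
    by (subst sum.lessThan_Suc_shift) (simp del: sum.lessThan_Suc)
  also have "(\<Sum>i<j. real (j choose Suc i) * a (Suc i) * b (Suc (j - Suc i)))
        = (\<Sum>i\<le>j. real (j choose Suc i) * a (Suc i) * b (j - i))"
    by (simp add: lessThan_Suc_atMost[symmetric] Suc_diff_Suc)
  finally show ?thesis unfolding R by (simp add: sum.distrib algebra_simps)
qed

lemma has_real_derivative_leibniz_sum:
  assumes "successive_derivs N U S" and "successive_derivs N V S" and "j < N" and "t \<in> S"
  shows "((\<lambda>s. \<Sum>i\<le>j. real (j choose i) * U i s * V (j - i) s) has_real_derivative
          (\<Sum>i\<le>Suc j. real (Suc j choose i) * U i t * V (Suc j - i) t)) (at t within S)"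
proof -
  have "((\<lambda>s. \<Sum>i\<le>j. real (j choose i) * U i s * V (j - i) s) has_real_derivative
          (\<Sum>i\<le>j. real (j choose i) * (U (Suc i) t * V (j - i) t + U i t * V (Suc (j - i)) t)))
          (at t within S)"
  proof (rule DERIV_sum)
    fix i assume "i \<in> {..j}"
    then have "i < N" "j - i < N" using assms(3) by auto
    then show "((\<lambda>s. real (j choose i) * U i s * V (j - i) s) has_real_derivative
        real (j choose i) * (U (Suc i) t * V (j - i) t + U i t * V (Suc (j - i)) t)) (at t within S)"
      using successive_derivsD[OF assms(1)] successive_derivsD[OF assms(2)] assms(4)
      by (auto intro!: derivative_eq_intros simp: algebra_simps)
  qed
  then show ?thesis using leibniz_sum_Suc[of j "\<lambda>i. U i t" "\<lambda>i. V i t"] by simp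
qed

lemma successive_derivs_linear_ode_deriv:
  assumes D: "successive_derivs m D S"
    and x: "\<And>t. t \<in> S \<Longrightarrow> (x has_real_derivative D 0 t * x t) (at t within S)"
  shows "successive_derivs (Suc m) (linear_ode_deriv D x) S"
proof -
  have "successive_derivs (Suc n) (linear_ode_deriv D x) S" if "n \<le> m" for n
    using that
  proof (induction n)
    case 0
    have "linear_ode_deriv D x 0 = x" by (simp add: fun_eq_iff)
    then show ?case using x by (simp add: successive_derivs_def mult.commute)
  next
    case (Suc n)
    then have IH: "successive_derivs (Suc n) (linear_ode_deriv D x) S" by simp
    have "(linear_ode_deriv D x (Suc n) has_real_derivative linear_ode_deriv D x (Suc (Suc n)) t)
          (at t within S)" if "t \<in> S" for t
    proof -
      have "linear_ode_deriv D x (Suc n) =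
          (\<lambda>s. \<Sum>i\<le>n. real (n choose i) * D i s * linear_ode_deriv D x (n - i) s)"
        by (simp add: fun_eq_iff)
      then show ?thesis
        using has_real_derivative_leibniz_sum[OF successive_derivs_mono[OF D Suc.prems] IH lessI that]
        by (simp del: sum.atMost_Suc)
    qed
    then show ?case using IH by (auto simp: successive_derivs_def less_Suc_eq)
  qed
  then show ?thesis by simp
qed

lemma abs_linear_ode_deriv_le:
  assumes M: "M \<ge> 0" and D: "\<And>j t. j \<le> m \<Longrightarrow> t \<in> S \<Longrightarrow> \<bar>D j t\<bar> \<le> M"
    and x: "\<And>t. t \<in> S \<Longrightarrow> \<bar>x t\<bar> \<le> X" and "n \<le> Suc m" and t: "t \<in> S"
  shows "\<bar>linear_ode_deriv D x n t\<bar> \<le> X * (\<Prod>i<n. 1 + M * 2 ^ i)"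
  using assms(4)
proof (induction n rule: less_induct)
  case (less n)
  define P where "P = (\<lambda>n. \<Prod>i<n. 1 + M * (2::real) ^ i)"
  have X: "X \<ge> 0" using x[OF t] by linarith
  have P_mono: "P i \<le> P n" if "i \<le> n" for i n
    unfolding P_def using that M by (intro prod_mono2) auto
  show ?case
  proof (cases n)
    case 0
    then show ?thesis using x[OF t] by simp
  next
    case (Suc n')
    have "\<bar>linear_ode_deriv D x n t\<bar>
        \<le> (\<Sum>i\<le>n'. \<bar>real (n' choose i) * D i t * linear_ode_deriv D x (n' - i) t\<bar>)"
      using Suc by (simp add: sum_abs)
    also have "\<dots> \<le> (\<Sum>i\<le>n'. real (n' choose i) * (M * (X * P n')))"
    proof (rule sum_mono)
      fix i assume i: "i \<in> {..n'}"
      have "\<bar>linear_ode_deriv D x (n' - i) t\<bar> \<le> X * P (n' - i)"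
        using less.IH[of "n' - i"] Suc less.prems by (simp add: P_def)
      also have "\<dots> \<le> X * P n'" using X P_mono by (intro mult_left_mono) auto
      finally have "\<bar>D i t\<bar> * \<bar>linear_ode_deriv D x (n' - i) t\<bar> \<le> M * (X * P n')"
        using D[of i t] i Suc less.prems t M by (intro mult_mono) auto
      then show "\<bar>real (n' choose i) * D i t * linear_ode_deriv D x (n' - i) t\<bar>
          \<le> real (n' choose i) * (M * (X * P n'))"
        by (simp add: abs_mult mult.assoc mult_left_mono)
    qed
    also have "\<dots> = X * (P n' * (M * 2 ^ n'))"
    proof -
      have "(\<Sum>i\<le>n'. real (n' choose i)) = 2 ^ n'"
        using choose_row_sum[of n'] by (metis of_nat_numeral of_nat_power of_nat_sum)
      then have "(\<Sum>i\<le>n'. real (n' choose i) * (M * (X * P n'))) = 2 ^ n' * (M * (X * P n'))"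
        by (simp add: sum_distrib_right[symmetric])
      then show ?thesis by (simp add: algebra_simps)
    qed
    also have "\<dots> \<le> X * P n"
    proof (intro mult_left_mono X)
      have "P n' \<ge> 0" unfolding P_def using M by (intro prod_nonneg) auto
      then show "P n' * (M * 2 ^ n') \<le> P n" by (simp add: Suc P_def algebra_simps)
    qed
    finally show ?thesis by (simp add: P_def)
  qed
qed

lemma taylor_remainder_le:
  assumes F: "successive_derivs n F S" and "n > 0" and sub: "{lo<..<hi} \<subseteq> S"
    and C: "\<And>s. s \<in> S \<Longrightarrow> \<bar>F n s\<bar> \<le> C" and t: "t \<in> {lo<..<hi}" and \<tau>: "\<tau> \<in> {lo<..<hi}"
  shows "\<bar>F 0 \<tau> - (\<Sum>j<n. F j t / fact j * (\<tau> - t) ^ j)\<bar> \<le> C * \<bar>\<tau> - t\<bar> ^ n"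
proof (cases "\<tau> = t")
  case True
  then show ?thesis
    using \<open>n > 0\<close> by (cases n) (simp_all add: sum.lessThan_Suc_shift del: sum.lessThan_Suc)
next
  case False
  have "\<forall>j s. j < n \<and> min t \<tau> \<le> s \<and> s \<le> max t \<tau> \<longrightarrow> DERIV (F j) s :> F (Suc j) s"
  proof (intro allI impI)
    fix j s assume js: "j < n \<and> min t \<tau> \<le> s \<and> s \<le> max t \<tau>"
    then have "s \<in> {lo<..<hi}" using t \<tau> by auto
    then have sS: "s \<in> S" and sI: "s \<in> interior S"
      using sub interior_maximal[OF sub open_greaterThanLessThan] by auto
    have "(F j has_real_derivative F (Suc j) s) (at s within S)"
      using successive_derivsD[OF F _ sS] js by simp
    then show "DERIV (F j) s :> F (Suc j) s" by (simp add: at_within_interior[OF sI])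
  qed
  then have "\<exists>\<xi>. (if \<tau> < t then \<tau> < \<xi> \<and> \<xi> < t else t < \<xi> \<and> \<xi> < \<tau>) \<and>
      F 0 \<tau> = (\<Sum>j<n. F j t / fact j * (\<tau> - t) ^ j) + F n \<xi> / fact n * (\<tau> - t) ^ n"
    by (rule Taylor[OF \<open>n > 0\<close> refl]) (use False in auto)
  then obtain \<xi> where \<xi>: "if \<tau> < t then \<tau> < \<xi> \<and> \<xi> < t else t < \<xi> \<and> \<xi> < \<tau>"
    and eq: "F 0 \<tau> = (\<Sum>j<n. F j t / fact j * (\<tau> - t) ^ j) + F n \<xi> / fact n * (\<tau> - t) ^ n"
    by blast
  have "\<xi> \<in> {lo<..<hi}" using \<xi> t \<tau> by (auto split: if_splits)
  then have "\<bar>F n \<xi>\<bar> \<le> C" using C sub by blast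
  moreover have "\<bar>F n \<xi>\<bar> / fact n \<le> \<bar>F n \<xi>\<bar> / 1"
    by (rule divide_left_mono) (auto intro: fact_ge_1)
  ultimately have "\<bar>F n \<xi>\<bar> / fact n \<le> C" by simp
  then have "\<bar>F n \<xi> / fact n\<bar> * \<bar>\<tau> - t\<bar> ^ n \<le> C * \<bar>\<tau> - t\<bar> ^ n"
    by (intro mult_right_mono) auto
  moreover have "\<bar>F 0 \<tau> - (\<Sum>j<n. F j t / fact j * (\<tau> - t) ^ j)\<bar> = \<bar>F n \<xi> / fact n\<bar> * \<bar>\<tau> - t\<bar> ^ n"
    using eq by (simp add: abs_mult power_abs)
  ultimately show ?thesis by simp
qed

section \<open>Bias of the kernel smoother\<close>

lemma abs_integral_upto_le:
  fixes \<theta> :: "real \<Rightarrow> real"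
  assumes "continuous_on {0..T} \<theta>" and "\<And>t. t \<in> {0..T} \<Longrightarrow> \<bar>\<theta> t\<bar> \<le> L" and "L \<ge> 0"
    and "s \<in> {0..T}"
  shows "\<bar>integral {0..s} \<theta>\<bar> \<le> L * T"
proof -
  have "continuous_on {0..s} \<theta>" using assms(4) by (intro continuous_on_subset[OF assms(1)]) auto
  then have "norm (integral {0..s} \<theta>) \<le> L * (s - 0)"
    using integral_bound[of 0 s \<theta> L] assms(2,4) by auto
  also have "\<dots> \<le> L * T" using assms(3,4) by (intro mult_left_mono) auto
  finally show ?thesis by simp
qed

lemma det_sol_has_real_derivative:
  assumes "continuous_on {0..T} \<theta>" and "t \<in> {0..T}"
  shows "(det_sol x0 \<theta> has_real_derivative \<theta> t * det_sol x0 \<theta> t) (at t within {0..T})"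
proof -
  have "((\<lambda>u. integral {0..u} \<theta>) has_real_derivative \<theta> t) (at t within {0..T})"
    using integral_has_vector_derivative[OF assms] by (simp add: has_real_derivative_iff_has_vector_derivative)
  then have "((\<lambda>u. x0 * exp (integral {0..u} \<theta>)) has_real_derivative
      x0 * (exp (integral {0..t} \<theta>) * \<theta> t)) (at t within {0..T})"
    by (auto intro!: derivative_eq_intros)
  then show ?thesis unfolding det_sol_def[abs_def] by (simp add: algebra_simps)
qed

lemma abs_det_sol_le:
  assumes "continuous_on {0..T} \<theta>" and "\<And>t. t \<in> {0..T} \<Longrightarrow> \<bar>\<theta> t\<bar> \<le> L" and "L \<ge> 0"
    and "t \<in> {0..T}"
  shows "\<bar>det_sol x0 \<theta> t\<bar> \<le> \<bar>x0\<bar> * exp (L * T)"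
  using abs_integral_upto_le[OF assms] by (simp add: det_sol_def abs_mult mult_left_mono)

lemma continuous_on_det_sol:
  "continuous_on {0..T} \<theta> \<Longrightarrow> continuous_on {0..T} (det_sol x0 \<theta>)"
  using det_sol_has_real_derivative by (rule DERIV_continuous_on)

text \<open>All derivatives of \<open>x\<close> are polynomials in those of \<open>\<theta>\<close>, which are uniformly bounded on
  \<open>\<Theta>\<^sub>k\<^sub>+\<^sub>1(L)\<close>; hence so are the derivatives of \<open>\<theta> x = x'\<close>.\<close>
lemma Theta_class_det_sol_derivs:
  assumes "T > 0" and "L \<ge> 0" and "L1 \<ge> 0"
  shows "\<exists>C\<ge>0. \<forall>\<theta>\<in>Theta_class T (Suc k) L L1. \<exists>F. successive_derivs (Suc k) F {0..T} \<and>
           (\<forall>s\<in>{0..T}. F 0 s = \<theta> s * det_sol x0 \<theta> s \<and> \<bar>F (Suc k) s\<bar> \<le> C)"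
proof -
  obtain M where M: "\<forall>\<theta>\<in>Theta_class T (Suc k) L L1. \<exists>D. (\<forall>t\<in>{0..T}. D 0 t = \<theta> t) \<and>
      successive_derivs (Suc k) D {0..T} \<and> (\<forall>j\<le>Suc k. \<forall>t\<in>{0..T}. \<bar>D j t\<bar> \<le> M)"
    using Theta_class_uniform_derivs[OF assms(1) _ assms(2,3), of "Suc k"] by auto
  define M' where "M' = max M 0"
  define X where "X = \<bar>x0\<bar> * exp (L * T)"
  show ?thesis
  proof (intro exI[of _ "X * (\<Prod>i<Suc (Suc k). 1 + M' * 2 ^ i)"] conjI ballI)
    show "0 \<le> X * (\<Prod>i<Suc (Suc k). 1 + M' * 2 ^ i)"
      unfolding X_def M'_def by (intro mult_nonneg_nonneg prod_nonneg) auto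
    fix \<theta> assume \<theta>: "\<theta> \<in> Theta_class T (Suc k) L L1"
    obtain D where D0: "\<forall>t\<in>{0..T}. D 0 t = \<theta> t" and D: "successive_derivs (Suc k) D {0..T}"
      and DM: "\<forall>j\<le>Suc k. \<forall>t\<in>{0..T}. \<bar>D j t\<bar> \<le> M"
      using M \<theta> by blast
    have \<theta>c: "continuous_on {0..T} \<theta>" by (rule Theta_class_continuous_on[OF \<theta>])
    define E where "E = linear_ode_deriv D (det_sol x0 \<theta>)"
    have "successive_derivs (Suc (Suc k)) E {0..T}"
      using successive_derivs_linear_ode_deriv[OF D] det_sol_has_real_derivative[OF \<theta>c] D0
      by (simp add: E_def)
    moreover have "\<bar>E (Suc (Suc k)) s\<bar> \<le> X * (\<Prod>i<Suc (Suc k). 1 + M' * 2 ^ i)" if "s \<in> {0..T}" for s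
      unfolding E_def
    proof (rule abs_linear_ode_deriv_le[OF _ _ _ order_refl that])
      show "\<bar>D j t\<bar> \<le> M'" if "j \<le> Suc k" "t \<in> {0..T}" for j t
        using DM that unfolding M'_def by (meson atLeastAtMost_iff max.coboundedI1)
      show "\<bar>det_sol x0 \<theta> t\<bar> \<le> X" if "t \<in> {0..T}" for t
        unfolding X_def by (rule abs_det_sol_le[OF \<theta>c Theta_class_bounded[OF \<theta>] assms(2) that])
    qed (simp add: M'_def)
    moreover have "E 1 s = \<theta> s * det_sol x0 \<theta> s" if "s \<in> {0..T}" for s
      using D0 that by (simp add: E_def)
    ultimately show "\<exists>F. successive_derivs (Suc k) F {0..T} \<and> (\<forall>s\<in>{0..T}.
        F 0 s = \<theta> s * det_sol x0 \<theta> s \<and> \<bar>F (Suc k) s\<bar> \<le> X * (\<Prod>i<Suc (Suc k). 1 + M' * 2 ^ i))"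
      by (intro exI[of _ "\<lambda>j. E (Suc j)"] conjI successive_derivs_shift) auto
  qed
qed

lemma Theta_class_det_sol_taylor:
  assumes "T > 0" and "L \<ge> 0" and "L1 \<ge> 0"
  shows "\<exists>C\<ge>0. \<forall>\<theta>\<in>Theta_class T (Suc k) L L1. \<forall>t\<in>{0<..<T}. \<exists>c. c 0 = \<theta> t * det_sol x0 \<theta> t \<and>
           (\<forall>\<tau>\<in>{0<..<T}. \<bar>\<theta> \<tau> * det_sol x0 \<theta> \<tau> - (\<Sum>j\<le>k. c j * (\<tau> - t) ^ j)\<bar>
                            \<le> C * \<bar>\<tau> - t\<bar> ^ Suc k)"
proof -
  obtain C where "C \<ge> 0" and C: "\<forall>\<theta>\<in>Theta_class T (Suc k) L L1. \<exists>F. successive_derivs (Suc k) F {0..T} \<and>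
      (\<forall>s\<in>{0..T}. F 0 s = \<theta> s * det_sol x0 \<theta> s \<and> \<bar>F (Suc k) s\<bar> \<le> C)"
    using Theta_class_det_sol_derivs[OF assms] by blast
  show ?thesis
  proof (intro exI[of _ C] conjI ballI \<open>C \<ge> 0\<close>)
    fix \<theta> t assume \<theta>: "\<theta> \<in> Theta_class T (Suc k) L L1" and t: "t \<in> {0<..<T}"
    obtain F where F: "successive_derivs (Suc k) F {0..T}"
      and F0: "\<And>s. s \<in> {0..T} \<Longrightarrow> F 0 s = \<theta> s * det_sol x0 \<theta> s"
      and FC: "\<And>s. s \<in> {0..T} \<Longrightarrow> \<bar>F (Suc k) s\<bar> \<le> C"
      using C \<theta> by blast
    show "\<exists>c. c 0 = \<theta> t * det_sol x0 \<theta> t \<and>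
        (\<forall>\<tau>\<in>{0<..<T}. \<bar>\<theta> \<tau> * det_sol x0 \<theta> \<tau> - (\<Sum>j\<le>k. c j * (\<tau> - t) ^ j)\<bar> \<le> C * \<bar>\<tau> - t\<bar> ^ Suc k)"
    proof (intro exI[of _ "\<lambda>j. F j t / fact j"] conjI ballI)
      show "F 0 t / fact 0 = \<theta> t * det_sol x0 \<theta> t" using F0 t by simp
      fix \<tau> assume \<tau>: "\<tau> \<in> {0<..<T}"
      have "\<bar>F 0 \<tau> - (\<Sum>j<Suc k. F j t / fact j * (\<tau> - t) ^ j)\<bar> \<le> C * \<bar>\<tau> - t\<bar> ^ Suc k"
        by (rule taylor_remainder_le[OF F _ _ FC t \<tau>]) auto
      then show "\<bar>\<theta> \<tau> * det_sol x0 \<theta> \<tau> - (\<Sum>j\<le>k. F j t / fact j * (\<tau> - t) ^ j)\<bar> \<le> C * \<bar>\<tau> - t\<bar> ^ Suc k"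
        using F0 \<tau> by (simp add: lessThan_Suc_atMost)
    qed
  qed
qed

lemma integrable_bounded_support:
  fixes h :: "real \<Rightarrow> real"
  assumes "h \<in> borel_measurable borel" and "\<And>u. u \<in> {A..B} \<Longrightarrow> \<bar>h u\<bar> \<le> C"
    and "\<And>u. u \<notin> {A..B} \<Longrightarrow> h u = 0"
  shows "integrable lborel h"
  by (rule integrableI_bounded_set[where A="{A..B}" and B=C])
    (use assms in \<open>auto simp: emeasure_lborel_Icc_eq\<close>)

locale compact_kernel =
  fixes G :: "real \<Rightarrow> real" and K A B :: real
  assumes G_borel: "G \<in> borel_measurable borel"
    and abs_G_le: "\<And>u. \<bar>G u\<bar> \<le> K"
    and support_neg: "A < 0" and support_pos: "0 < B"
    and G_outside: "\<And>u. u \<notin> {A..B} \<Longrightarrow> G u = 0"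

lemma kernel_okE:
  assumes "kernel_ok k G"
  obtains K A B where "compact_kernel G K A B" and "(LINT u|lborel. G u) = 1"
    and "\<And>j. j \<in> {1..k} \<Longrightarrow> (LINT u|lborel. u ^ j * G u) = 0"
  using assms unfolding kernel_ok_def compact_kernel_def by blast

context compact_kernel
begin

lemma K_nonneg: "K \<ge> 0"
  using abs_G_le[of 0] by linarith

lemma rescaled_G_borel [measurable]: "(\<lambda>\<tau>. G ((\<tau> - t) / \<phi>)) \<in> borel_measurable borel"
  using G_borel by measurable

lemma integrable_moment: "integrable lborel (\<lambda>u. u ^ j * G u)"
proof (rule integrable_bounded_support[where C="max (- A) B ^ j * K"])
  fix u assume u: "u \<in> {A..B}"
  then have "\<bar>u\<bar> ^ j \<le> max (- A) B ^ j" by (intro power_mono) auto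
  then show "\<bar>u ^ j * G u\<bar> \<le> max (- A) B ^ j * K"
    using abs_G_le[of u] K_nonneg support_pos by (simp add: abs_mult power_abs mult_mono)
qed (use G_borel G_outside in auto)

lemma polynomial_approx_bias:
  fixes F :: "real \<Rightarrow> real" and c :: "nat \<Rightarrow> real"
  assumes int1: "(LINT u|lborel. G u) = 1"
    and moments: "\<And>j. j \<in> {1..k} \<Longrightarrow> (LINT u|lborel. u ^ j * G u) = 0"
    and "\<phi> > 0" and "Cr \<ge> 0"
    and Fm: "(\<lambda>u. indicator {A..B} u * F u) \<in> borel_measurable borel"
    and rem: "\<And>u. u \<in> {A..B} \<Longrightarrow> \<bar>F u - (\<Sum>j\<le>k. c j * (\<phi> * u) ^ j)\<bar> \<le> Cr * \<bar>\<phi> * u\<bar> ^ Suc k"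
  shows "\<bar>(LINT u|lborel. G u * F u) - c 0\<bar> \<le> K * Cr * (\<phi> * max (- A) B) ^ Suc k * (B - A)"
proof -
  define p where "p = (\<lambda>u. \<Sum>j\<le>k. c j * (\<phi> * u) ^ j)"
  define Q where "Q = K * Cr * (\<phi> * max (- A) B) ^ Suc k"
  have Gp: "(\<lambda>u. G u * p u) = (\<lambda>u. \<Sum>j\<le>k. c j * \<phi> ^ j * (u ^ j * G u))"
    by (auto simp: p_def sum_distrib_left fun_eq_iff power_mult_distrib algebra_simps)
  have ip: "integrable lborel (\<lambda>u. G u * p u)"
    unfolding Gp using integrable_moment by simp
  have "(LINT u|lborel. G u * p u) = (\<Sum>j\<le>k. c j * \<phi> ^ j * (LINT u|lborel. u ^ j * G u))"
    unfolding Gp using integrable_moment by simp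
  also have "\<dots> = (\<Sum>j\<in>{0}. c j * \<phi> ^ j * (LINT u|lborel. u ^ j * G u))"
    using moments by (intro sum.mono_neutral_right) auto
  finally have Ip: "(LINT u|lborel. G u * p u) = c 0" using int1 by simp
  have rb: "\<bar>G u * (F u - p u)\<bar> \<le> Q" if "u \<in> {A..B}" for u
  proof -
    have "\<bar>\<phi> * u\<bar> ^ Suc k \<le> (\<phi> * max (- A) B) ^ Suc k"
      using that \<open>\<phi> > 0\<close> by (intro power_mono) (auto simp: abs_mult)
    then have "\<bar>F u - p u\<bar> \<le> Cr * (\<phi> * max (- A) B) ^ Suc k"
      using rem[OF that] \<open>Cr \<ge> 0\<close> unfolding p_def by (meson mult_left_mono order_trans)
    then show ?thesis
      using abs_G_le[of u] K_nonneg by (simp add: Q_def abs_mult mult_mono mult.assoc)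
  qed
  have GF: "(\<lambda>u. G u * F u) = (\<lambda>u. G u * (indicator {A..B} u * F u))"
    using G_outside by (force simp: fun_eq_iff indicator_def)
  have ir: "integrable lborel (\<lambda>u. G u * (F u - p u))"
  proof (rule integrable_bounded_support[OF _ rb])
    have "(\<lambda>u. G u * (F u - p u)) = (\<lambda>u. G u * (indicator {A..B} u * F u) - G u * p u)"
      using GF by (auto simp: fun_eq_iff algebra_simps)
    then show "(\<lambda>u. G u * (F u - p u)) \<in> borel_measurable borel"
      using G_borel Fm ip by (simp add: borel_measurable_integrable)
  qed (use G_outside in auto)
  have "(\<lambda>u. G u * F u) = (\<lambda>u. G u * p u + G u * (F u - p u))"
    by (simp add: algebra_simps)
  then have "(LINT u|lborel. G u * F u) - c 0 = (LINT u|lborel. G u * (F u - p u))"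
    using ip ir Ip by simp
  also have "\<bar>\<dots>\<bar> \<le> (LINT u|lborel. indicator {A..B} u * Q)"
  proof (rule order_trans[OF integral_abs_bound integral_mono])
    show "integrable lborel (\<lambda>u. indicator {A..B} u * Q)"
      using support_neg support_pos by (simp add: set_integrable_def[symmetric])
    show "\<bar>G u * (F u - p u)\<bar> \<le> indicator {A..B} u * Q" for u
      using rb[of u] G_outside[of u] by (cases "u \<in> {A..B}") auto
  qed (use ir in auto)
  also have "\<dots> = Q * (B - A)" using support_neg support_pos by simp
  finally show ?thesis by (simp add: Q_def)
qed

lemma set_integrable_rescaled:
  assumes "continuous_on {0..T} g"
  shows "set_integrable lborel {0..T} (\<lambda>\<tau>. G ((\<tau> - t) / \<phi>) * g \<tau>)"
proof -
  have "bounded (g ` {0..T})"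
    by (rule compact_imp_bounded[OF compact_continuous_image[OF assms compact_Icc]])
  then obtain Cg where "\<forall>y\<in>g ` {0..T}. norm y \<le> Cg" by (auto simp: bounded_iff)
  then have Cg: "\<And>s. s \<in> {0..T} \<Longrightarrow> \<bar>g s\<bar> \<le> Cg" by auto
  have "integrable lborel (\<lambda>\<tau>. G ((\<tau> - t) / \<phi>) * (indicator {0..T} \<tau> * g \<tau>))"
  proof (rule integrable_bounded_support[where A=0 and B=T and C="K * Cg"])
    show "(\<lambda>\<tau>. G ((\<tau> - t) / \<phi>) * (indicator {0..T} \<tau> * g \<tau>)) \<in> borel_measurable borel"
      using borel_measurable_continuous_on_indicator[OF _ assms] by simp
    show "\<bar>G ((u - t) / \<phi>) * (indicator {0..T} u * g u)\<bar> \<le> K * Cg" if "u \<in> {0..T}" for u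
      using abs_G_le Cg[OF that] that by (simp add: abs_mult mult_mono')
  qed auto
  then show ?thesis by (simp add: set_integrable_def mult.left_commute)
qed

lemma integral_rescaled:
  assumes "continuous_on {0..T} g" and "\<phi> > 0" and window: "\<And>u. u \<in> {A..B} \<Longrightarrow> t + \<phi> * u \<in> {0..T}"
  shows "integral {0..T} (\<lambda>\<tau>. G ((\<tau> - t) / \<phi>) * g \<tau>) = \<phi> * (LINT u|lborel. G u * g (t + \<phi> * u))"
proof -
  define h where "h = (\<lambda>\<tau>. indicator {0..T} \<tau> * (G ((\<tau> - t) / \<phi>) * g \<tau>))"
  have "integral {0..T} (\<lambda>\<tau>. G ((\<tau> - t) / \<phi>) * g \<tau>) = (LINT \<tau>|lborel. h \<tau>)"
    using set_borel_integral_eq_integral(2)[OF set_integrable_rescaled[OF assms(1)]]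
    by (simp add: set_lebesgue_integral_def h_def)
  also have "\<dots> = \<phi> * (LINT u|lborel. h (t + \<phi> * u))"
    using lborel_integral_real_affine[of \<phi> h t] \<open>\<phi> > 0\<close> by simp
  also have "(\<lambda>u. h (t + \<phi> * u)) = (\<lambda>u. G u * g (t + \<phi> * u))"
    using window G_outside \<open>\<phi> > 0\<close> by (force simp: h_def fun_eq_iff indicator_def)
  finally show ?thesis .
qed

lemma rescaled_window_inside:
  assumes "0 < \<phi>" and "\<phi> < min (a / (- A)) ((T - b) / B)" and "t \<in> {a..b}" and "u \<in> {A..B}"
  shows "t + \<phi> * u \<in> {0<..<T}"
proof -
  have "\<phi> * (- A) < a" "\<phi> * B < T - b"
    using assms(2) mult_strict_right_mono[of \<phi> "a / (- A)" "- A"]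
      mult_strict_right_mono[of \<phi> "(T - b) / B" B] support_neg support_pos by simp_all
  moreover have "\<phi> * A \<le> \<phi> * u" "\<phi> * u \<le> \<phi> * B" using assms(1,4) by auto
  ultimately show ?thesis using assms(3) by auto
qed

lemma bias_bound:
  assumes "T > 0" and "L \<ge> 0" and "L1 \<ge> 0"
    and int1: "(LINT u|lborel. G u) = 1"
    and moments: "\<And>j. j \<in> {1..k} \<Longrightarrow> (LINT u|lborel. u ^ j * G u) = 0"
    and "0 < a" and "a \<le> b" and "b < T"
  shows "\<exists>Cb \<phi>0. \<phi>0 > 0 \<and> (\<forall>\<theta>\<in>Theta_class T (Suc k) L L1. \<forall>\<phi>. 0 < \<phi> \<longrightarrow> \<phi> < \<phi>0 \<longrightarrow>
     (\<forall>t\<in>{a..b}. \<bar>(1 / \<phi>) * integral {0..T} (\<lambda>\<tau>. G ((\<tau> - t) / \<phi>) * \<theta> \<tau> * det_sol x0 \<theta> \<tau>)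
                    - \<theta> t * det_sol x0 \<theta> t\<bar> \<le> Cb * \<phi> ^ Suc k))"
proof -
  obtain C where C0: "C \<ge> 0" and C: "\<forall>\<theta>\<in>Theta_class T (Suc k) L L1. \<forall>t\<in>{0<..<T}. \<exists>c. c 0 = \<theta> t * det_sol x0 \<theta> t \<and>
           (\<forall>\<tau>\<in>{0<..<T}. \<bar>\<theta> \<tau> * det_sol x0 \<theta> \<tau> - (\<Sum>j\<le>k. c j * (\<tau> - t) ^ j)\<bar> \<le> C * \<bar>\<tau> - t\<bar> ^ Suc k)"
    using Theta_class_det_sol_taylor[OF assms(1-3)] by blast
  define \<phi>0 where "\<phi>0 = min (a / (- A)) ((T - b) / B)"
  show ?thesis
  proof (rule exI[of _ "K * C * max (- A) B ^ Suc k * (B - A)"], rule exI[of _ \<phi>0],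
      intro conjI ballI allI impI)
    show "\<phi>0 > 0" using assms(6,8) support_neg support_pos by (auto simp: \<phi>0_def divide_pos_neg)
    fix \<theta> \<phi> t assume \<theta>: "\<theta> \<in> Theta_class T (Suc k) L L1" and \<phi>: "0 < \<phi>" "\<phi> < \<phi>0"
      and t: "t \<in> {a..b}"
    define f where "f = (\<lambda>s. \<theta> s * det_sol x0 \<theta> s)"
    have window: "t + \<phi> * u \<in> {0<..<T}" if "u \<in> {A..B}" for u
      using rescaled_window_inside[OF \<phi>(1) \<phi>(2)[unfolded \<phi>0_def] t that] .
    have window': "t + \<phi> * u \<in> {0..T}" if "u \<in> {A..B}" for u
      using window[OF that] by simp
    have "t \<in> {0<..<T}" using t assms(6,8) by auto
    then obtain c where c0: "c 0 = f t"
      and rem: "\<And>\<tau>. \<tau> \<in> {0<..<T} \<Longrightarrow> \<bar>f \<tau> - (\<Sum>j\<le>k. c j * (\<tau> - t) ^ j)\<bar> \<le> C * \<bar>\<tau> - t\<bar> ^ Suc k"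
      using C \<theta> unfolding f_def by blast
    have fc: "continuous_on {0..T} f"
      using Theta_class_continuous_on[OF \<theta>] continuous_on_det_sol
      unfolding f_def by (intro continuous_intros)
    have fm: "(\<lambda>u. indicator {A..B} u * f (t + \<phi> * u)) \<in> borel_measurable borel"
    proof -
      have "(\<lambda>u. indicator {A..B} u * f (t + \<phi> * u))
          = (\<lambda>u. indicator {A..B} u * (indicator {0..T} (t + \<phi> * u) * f (t + \<phi> * u)))"
        using window' by (auto simp: fun_eq_iff indicator_def)
      moreover have "(\<lambda>s. indicator {0..T} s * f s) \<in> borel_measurable borel"
        using borel_measurable_continuous_on_indicator[OF _ fc] by simp
      ultimately show ?thesis by simp
    qed
    have "\<bar>(LINT u|lborel. G u * f (t + \<phi> * u)) - c 0\<bar> \<le> K * C * (\<phi> * max (- A) B) ^ Suc k * (B - A)"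
    proof (rule polynomial_approx_bias[OF int1 moments \<phi>(1) C0 fm])
      fix u assume "u \<in> {A..B}"
      then show "\<bar>f (t + \<phi> * u) - (\<Sum>j\<le>k. c j * (\<phi> * u) ^ j)\<bar> \<le> C * \<bar>\<phi> * u\<bar> ^ Suc k"
        using rem[OF window] by simp
    qed
    moreover have "(1 / \<phi>) * integral {0..T} (\<lambda>\<tau>. G ((\<tau> - t) / \<phi>) * \<theta> \<tau> * det_sol x0 \<theta> \<tau>)
        = (LINT u|lborel. G u * f (t + \<phi> * u))"
      using integral_rescaled[OF fc \<phi>(1) window'] \<phi> by (simp add: f_def mult.assoc)
    ultimately show "\<bar>(1 / \<phi>) * integral {0..T} (\<lambda>\<tau>. G ((\<tau> - t) / \<phi>) * \<theta> \<tau> * det_sol x0 \<theta> \<tau>)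
        - \<theta> t * det_sol x0 \<theta> t\<bar> \<le> K * C * max (- A) B ^ Suc k * (B - A) * \<phi> ^ Suc k"
      using c0 by (simp add: f_def power_mult_distrib algebra_simps)
  qed
qed

end

section \<open>Variance of the noise term\<close>

lemma nn_integral_powr_Icc:
  fixes \<alpha> l :: real
  assumes "\<alpha> > -1" and "l \<ge> 0"
  shows "(\<integral>\<^sup>+s. ennreal (indicator {0..l} s * s powr \<alpha>) \<partial>lborel) = ennreal (l powr (\<alpha> + 1) / (\<alpha> + 1))"
proof -
  have "((\<lambda>s. s powr \<alpha>) has_integral (l powr (\<alpha> + 1) / (\<alpha> + 1))) {0..l}"
    by (rule has_integral_powr_from_0[OF assms])
  then have "((\<lambda>s. if s \<in> {0..l} then s powr \<alpha> else 0) has_integral (l powr (\<alpha> + 1) / (\<alpha> + 1))) UNIV"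
    by (subst has_integral_restrict_UNIV)
  moreover have "(\<lambda>s. indicator {0..l} s * s powr \<alpha>) = (\<lambda>s. if s \<in> {0..l} then s powr \<alpha> else 0)"
    by (auto simp: fun_eq_iff indicator_def)
  ultimately have "((\<lambda>s. indicator {0..l} s * s powr \<alpha>) has_integral (l powr (\<alpha> + 1) / (\<alpha> + 1))) UNIV"
    by simp
  then show ?thesis
    by (subst nn_integral_has_integral_lborel) (auto simp: indicator_def)
qed

lemma nn_integral_abs_diff_powr_le:
  fixes \<alpha> l u :: real
  assumes "\<alpha> > -1" and "l \<ge> 0"
  shows "(\<integral>\<^sup>+v. ennreal (indicator {u - l..u + l} v * \<bar>u - v\<bar> powr \<alpha>) \<partial>lborel)
          \<le> ennreal (2 * (l powr (\<alpha> + 1) / (\<alpha> + 1)))"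
proof -
  define F where "F = (\<lambda>s::real. indicator {0..l} s * s powr \<alpha>)"
  have Fm: "F \<in> borel_measurable borel" unfolding F_def by measurable
  have "ennreal (indicator {u - l..u + l} v * \<bar>u - v\<bar> powr \<alpha>) \<le> ennreal (F (v - u)) + ennreal (F (u - v))"
    for v
    by (cases "v \<ge> u") (auto simp: F_def indicator_def abs_minus_commute intro: add_increasing add_increasing2)
  then have "(\<integral>\<^sup>+v. ennreal (indicator {u - l..u + l} v * \<bar>u - v\<bar> powr \<alpha>) \<partial>lborel)
      \<le> (\<integral>\<^sup>+v. ennreal (F (v - u)) + ennreal (F (u - v)) \<partial>lborel)"
    by (intro nn_integral_mono)
  also have "\<dots> = (\<integral>\<^sup>+v. ennreal (F (v - u)) \<partial>lborel) + (\<integral>\<^sup>+v. ennreal (F (u - v)) \<partial>lborel)"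
    using Fm by (intro nn_integral_add) auto
  also have "(\<integral>\<^sup>+v. ennreal (F (v - u)) \<partial>lborel) = (\<integral>\<^sup>+s. ennreal (F s) \<partial>lborel)"
    using nn_integral_real_affine[of "\<lambda>v. ennreal (F (v - u))" 1 u] Fm by simp
  also have "(\<integral>\<^sup>+v. ennreal (F (u - v)) \<partial>lborel) = (\<integral>\<^sup>+s. ennreal (F s) \<partial>lborel)"
    using nn_integral_real_affine[of "\<lambda>v. ennreal (F (u - v))" "-1" u] Fm by simp
  also have "(\<integral>\<^sup>+s. ennreal (F s) \<partial>lborel) = ennreal (l powr (\<alpha> + 1) / (\<alpha> + 1))"
    unfolding F_def by (rule nn_integral_powr_Icc[OF assms])
  finally show ?thesis using assms by (simp add: ennreal_plus[symmetric] del: ennreal_plus)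
qed

lemma nn_integral_square_abs_diff_powr_le:
  fixes \<alpha> l c :: real
  assumes "\<alpha> > -1" and "l \<ge> 0"
  shows "(\<integral>\<^sup>+p. ennreal (indicator {c..c + l} (fst p) * indicator {c..c + l} (snd p) * \<bar>fst p - snd p\<bar> powr \<alpha>)
             \<partial>(lborel \<Otimes>\<^sub>M lborel)) \<le> ennreal (2 * l powr (\<alpha> + 2) / (\<alpha> + 1))"
proof -
  define W where "W = {c..c + l}"
  define C where "C = 2 * (l powr (\<alpha> + 1) / (\<alpha> + 1))"
  have C0: "C \<ge> 0" using assms by (auto simp: C_def)
  have "(\<integral>\<^sup>+p. ennreal (indicator W (fst p) * indicator W (snd p) * \<bar>fst p - snd p\<bar> powr \<alpha>) \<partial>(lborel \<Otimes>\<^sub>M lborel))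
      = (\<integral>\<^sup>+u. \<integral>\<^sup>+v. ennreal (indicator W u * indicator W v * \<bar>u - v\<bar> powr \<alpha>) \<partial>lborel \<partial>lborel)"
    by (subst lborel.nn_integral_fst[symmetric]) (auto simp: W_def)
  also have "\<dots> \<le> (\<integral>\<^sup>+u. ennreal (indicator W u * C) \<partial>lborel)"
  proof (intro nn_integral_mono)
    fix u
    show "(\<integral>\<^sup>+v. ennreal (indicator W u * indicator W v * \<bar>u - v\<bar> powr \<alpha>) \<partial>lborel) \<le> ennreal (indicator W u * C)"
    proof (cases "u \<in> W")
      case True
      have "(\<integral>\<^sup>+v. ennreal (indicator W u * indicator W v * \<bar>u - v\<bar> powr \<alpha>) \<partial>lborel)
          \<le> (\<integral>\<^sup>+v. ennreal (indicator {u - l..u + l} v * \<bar>u - v\<bar> powr \<alpha>) \<partial>lborel)"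
        using True by (intro nn_integral_mono ennreal_leI) (auto simp: W_def indicator_def)
      also have "\<dots> \<le> ennreal C" unfolding C_def by (rule nn_integral_abs_diff_powr_le[OF assms])
      finally show ?thesis using True by simp
    qed simp
  qed
  also have "\<dots> = ennreal C * (\<integral>\<^sup>+u. ennreal (indicator W u) \<partial>lborel)"
    using C0 by (subst nn_integral_cmult[symmetric]) (auto simp: W_def ennreal_mult' mult.commute)
  also have "\<dots> = ennreal (C * l)"
    using assms(2) C0 by (simp add: W_def ennreal_indicator ennreal_mult)
  also have "C * l = 2 * l powr (\<alpha> + 2) / (\<alpha> + 1)"
  proof (cases "l = 0")
    case False
    then have "l powr (\<alpha> + 2) = l powr (\<alpha> + 1) * l"
      using assms(2) powr_add[of l "\<alpha> + 1" 1] by (simp add: add.assoc)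
    then show ?thesis by (simp add: C_def)
  qed (simp add: C_def)
  finally show ?thesis unfolding W_def .
qed

locale hermite_noise = prob_space M for M :: "'a measure" +
  fixes H :: real and Z :: "real \<Rightarrow> 'a \<Rightarrow> real" and WI :: "(real \<Rightarrow> real) \<Rightarrow> 'a \<Rightarrow> real"
  assumes Z_borel: "t \<ge> 0 \<Longrightarrow> Z t \<in> borel_measurable M"
    and integrable_Z_square: "t \<ge> 0 \<Longrightarrow> integrable M (\<lambda>\<omega>. (Z t \<omega>)\<^sup>2)"
    and Z_variance: "t \<ge> 0 \<Longrightarrow> (\<integral>\<omega>. (Z t \<omega>)\<^sup>2 \<partial>M) = t powr (2 * H)"
    and Z_continuous: "\<omega> \<in> space M \<Longrightarrow> continuous_on {0..} (\<lambda>t. Z t \<omega>)"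
    and WI_borel: "wiener_admissible H f \<Longrightarrow> WI f \<in> borel_measurable M"
    and integrable_WI_square: "wiener_admissible H f \<Longrightarrow> integrable M (\<lambda>\<omega>. (WI f \<omega>)\<^sup>2)"
    and WI_variance: "wiener_admissible H f \<Longrightarrow> (\<integral>\<omega>. (WI f \<omega>)\<^sup>2 \<partial>M) =
       H * (2 * H - 1) * (\<integral>p. f (fst p) * f (snd p) * \<bar>fst p - snd p\<bar> powr (2 * H - 2) \<partial>(lborel \<Otimes>\<^sub>M lborel))"

lemma hermite_setting_imp_hermite_noise:
  assumes "hermite_setting M H Z WI"
  shows "hermite_noise M H Z WI"
proof -
  have "(\<integral>\<omega>. (Z t \<omega>)\<^sup>2 \<partial>M) = t powr (2 * H)" if "t \<ge> 0" for t
  proof -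
    have "(\<integral>\<omega>. Z t \<omega> * Z t \<omega> \<partial>M) = (t powr (2*H) + t powr (2*H) - \<bar>t - t\<bar> powr (2*H)) / 2"
      using assms that unfolding hermite_setting_def by blast
    then show ?thesis by (simp add: power2_eq_square)
  qed
  moreover have "(\<integral>\<omega>. (WI f \<omega>)\<^sup>2 \<partial>M) =
       H * (2 * H - 1) * (\<integral>p. f (fst p) * f (snd p) * \<bar>fst p - snd p\<bar> powr (2 * H - 2) \<partial>(lborel \<Otimes>\<^sub>M lborel))"
    if "wiener_admissible H f" for f
    using assms that unfolding hermite_setting_def by (simp add: power2_eq_square)
  ultimately show ?thesis
    using assms unfolding hermite_setting_def hermite_noise_def hermite_noise_axioms_def by blast
qed

locale hermite_kernel = hermite_noise M H Z WI + compact_kernel G K A B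
  for M :: "'a measure" and H Z WI G K A B

lemma (in compact_kernel) rescaled_kernel_energy_le:
  fixes t T \<phi> \<alpha> :: real
  assumes "\<alpha> > -1" and "\<phi> > 0"
  defines "g \<equiv> \<lambda>\<tau>. G ((\<tau> - t) / \<phi>) * indicator {0..T} \<tau>"
  shows "(\<integral>\<^sup>+p. ennreal (\<bar>g (fst p) * g (snd p)\<bar> * \<bar>fst p - snd p\<bar> powr \<alpha>) \<partial>(lborel \<Otimes>\<^sub>M lborel))
           \<le> ennreal (K\<^sup>2 * (2 * ((B - A) * \<phi>) powr (\<alpha> + 2) / (\<alpha> + 1)))"
proof -
  define l where "l = (B - A) * \<phi>"
  define c where "c = t + A * \<phi>"
  have l: "l \<ge> 0" using support_neg support_pos assms(2) by (simp add: l_def)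
  have gb: "\<bar>g u\<bar> \<le> K * indicator {c..c + l} u" for u
  proof (cases "u \<in> {c..c + l}")
    case False
    then have "(u - t) / \<phi> \<notin> {A..B}" using assms(2) by (auto simp: c_def l_def field_simps)
    then show ?thesis using G_outside K_nonneg by (simp add: g_def)
  qed (use abs_G_le K_nonneg in \<open>auto simp: g_def abs_mult indicator_def\<close>)
  have "\<bar>g (fst p) * g (snd p)\<bar> * \<bar>fst p - snd p\<bar> powr \<alpha>
      \<le> K\<^sup>2 * (indicator {c..c + l} (fst p) * indicator {c..c + l} (snd p) * \<bar>fst p - snd p\<bar> powr \<alpha>)" for p
  proof -
    have "\<bar>g (fst p) * g (snd p)\<bar> \<le> (K * indicator {c..c + l} (fst p)) * (K * indicator {c..c + l} (snd p))"
      unfolding abs_mult by (intro mult_mono gb) (auto simp: K_nonneg)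
    then have "\<bar>g (fst p) * g (snd p)\<bar> * \<bar>fst p - snd p\<bar> powr \<alpha>
        \<le> (K * indicator {c..c + l} (fst p)) * (K * indicator {c..c + l} (snd p)) * \<bar>fst p - snd p\<bar> powr \<alpha>"
      by (rule mult_right_mono) simp
    then show ?thesis by (simp add: power2_eq_square algebra_simps)
  qed
  then have "(\<integral>\<^sup>+p. ennreal (\<bar>g (fst p) * g (snd p)\<bar> * \<bar>fst p - snd p\<bar> powr \<alpha>) \<partial>(lborel \<Otimes>\<^sub>M lborel))
      \<le> (\<integral>\<^sup>+p. ennreal (K\<^sup>2) * ennreal (indicator {c..c + l} (fst p) * indicator {c..c + l} (snd p)
             * \<bar>fst p - snd p\<bar> powr \<alpha>) \<partial>(lborel \<Otimes>\<^sub>M lborel))"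
    by (intro nn_integral_mono) (simp add: ennreal_mult'[symmetric] ennreal_leI)
  also have "\<dots> = ennreal (K\<^sup>2) * (\<integral>\<^sup>+p. ennreal (indicator {c..c + l} (fst p) * indicator {c..c + l} (snd p)
             * \<bar>fst p - snd p\<bar> powr \<alpha>) \<partial>(lborel \<Otimes>\<^sub>M lborel))"
    by (rule nn_integral_cmult) measurable
  also have "\<dots> \<le> ennreal (K\<^sup>2) * ennreal (2 * l powr (\<alpha> + 2) / (\<alpha> + 1))"
    by (intro mult_left_mono nn_integral_square_abs_diff_powr_le assms(1) l) simp
  also have "\<dots> = ennreal (K\<^sup>2 * (2 * l powr (\<alpha> + 2) / (\<alpha> + 1)))"
    using assms(1) l by (subst ennreal_mult) auto
  finally show ?thesis by (simp add: l_def)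
qed

context hermite_kernel
begin

lemma WI_rescaled_kernel:
  fixes t T \<phi> :: real
  assumes "1/2 < H" and "\<phi> > 0"
  defines "g \<equiv> \<lambda>\<tau>. G ((\<tau> - t) / \<phi>) * indicator {0..T} \<tau>"
  shows "wiener_admissible H g"
    and "(\<integral>\<omega>. (WI g \<omega>)\<^sup>2 \<partial>M) \<le> 2 * H * K\<^sup>2 * (B - A) powr (2 * H) * \<phi> powr (2 * H)"
proof -
  define r where "r = K\<^sup>2 * (2 * ((B - A) * \<phi>) powr (2 * H) / (2 * H - 1))"
  have energy: "(\<integral>\<^sup>+p. ennreal (\<bar>g (fst p) * g (snd p)\<bar> * \<bar>fst p - snd p\<bar> powr (2 * H - 2))
      \<partial>(lborel \<Otimes>\<^sub>M lborel)) \<le> ennreal r"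
    using rescaled_kernel_energy_le[of "2 * H - 2" \<phi> t T] assms by (simp add: r_def g_def)
  then show adm: "wiener_admissible H g"
    unfolding wiener_admissible_def g_def
    by (auto simp: top_unique[symmetric] intro: le_less_trans)
  have "(\<integral>p. g (fst p) * g (snd p) * \<bar>fst p - snd p\<bar> powr (2 * H - 2) \<partial>(lborel \<Otimes>\<^sub>M lborel)) \<le> r"
    using assms(1)
    by (intro integral_real_bounded[OF _ order_trans[OF nn_integral_mono energy]])
      (auto simp: r_def intro!: ennreal_leI mult_right_mono)
  then have "(\<integral>\<omega>. (WI g \<omega>)\<^sup>2 \<partial>M) \<le> H * (2 * H - 1) * r"
    using WI_variance[OF adm] assms(1) by (simp add: mult_left_mono)
  also have "\<dots> = 2 * H * K\<^sup>2 * (B - A) powr (2 * H) * \<phi> powr (2 * H)"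
  proof -
    have "((B - A) * \<phi>) powr (2 * H) = (B - A) powr (2 * H) * \<phi> powr (2 * H)"
      using assms(2) support_neg support_pos by (simp add: powr_mult)
    then show ?thesis unfolding r_def using assms(1) by (simp add: field_simps)
  qed
  finally show "(\<integral>\<omega>. (WI g \<omega>)\<^sup>2 \<partial>M) \<le> 2 * H * K\<^sup>2 * (B - A) powr (2 * H) * \<phi> powr (2 * H)" .
qed

end

section \<open>Pathwise deviation of the solution from \<open>x\<close>\<close>

text \<open>Variation of constants: \<open>exp(-\<integral>\<^sub>0\<^sup>s \<theta>) (x\<^sub>0 + \<integral>\<^sub>0\<^sup>s \<theta> X)\<close> has derivative
  \<open>exp(-\<integral>\<^sub>0\<^sup>s \<theta>) \<theta>(s) \<epsilon> Z\<^sub>s\<close>.\<close>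
lemma sde_variation_of_constants:
  fixes \<theta> Xw Zw :: "real \<Rightarrow> real"
  assumes thc: "continuous_on {0..T} \<theta>" and Xc: "continuous_on {0..T} Xw"
    and eq: "\<forall>t\<in>{0..T}. Xw t = x0 + integral {0..t} (\<lambda>s. \<theta> s * Xw s) + \<epsilon> * Zw t"
    and \<tau>: "\<tau> \<in> {0..T}"
  shows "Xw \<tau> = det_sol x0 \<theta> \<tau> + \<epsilon> * Zw \<tau>
           + \<epsilon> * exp (integral {0..\<tau>} \<theta>) * integral {0..\<tau>} (\<lambda>s. exp (- integral {0..s} \<theta>) * \<theta> s * Zw s)"
proof -
  define \<Theta> where "\<Theta> = (\<lambda>s. integral {0..s} \<theta>)"
  define I where "I = (\<lambda>s. integral {0..s} (\<lambda>s. \<theta> s * Xw s))"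
  define J where "J = (\<lambda>s. exp (- \<Theta> s) * (I s + x0))"
  define j where "j = (\<lambda>s. exp (- \<Theta> s) * \<theta> s * (\<epsilon> * Zw s))"
  have \<Theta>d: "(\<Theta> has_real_derivative \<theta> s) (at s within {0..T})" if "s \<in> {0..T}" for s
    using integral_has_vector_derivative[OF thc that]
    by (simp add: \<Theta>_def has_real_derivative_iff_has_vector_derivative)
  have thX: "continuous_on {0..T} (\<lambda>s. \<theta> s * Xw s)" using thc Xc by (intro continuous_intros)
  have Id: "(I has_real_derivative \<theta> s * Xw s) (at s within {0..T})" if "s \<in> {0..T}" for s
    using integral_has_vector_derivative[OF thX that]
    by (simp add: I_def has_real_derivative_iff_has_vector_derivative)
  have Jd: "(J has_real_derivative j s) (at s within {0..T})" if s: "s \<in> {0..T}" for s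
  proof -
    have "(J has_real_derivative (exp (- \<Theta> s) * (- \<theta> s)) * (I s + x0) + exp (- \<Theta> s) * (\<theta> s * Xw s))
            (at s within {0..T})"
      unfolding J_def by (auto intro!: derivative_eq_intros \<Theta>d[OF s] Id[OF s])
    moreover have "(exp (- \<Theta> s) * (- \<theta> s)) * (I s + x0) + exp (- \<Theta> s) * (\<theta> s * Xw s) = j s"
      using eq s by (simp add: j_def I_def algebra_simps)
    ultimately show ?thesis by simp
  qed
  have \<tau>0: "0 \<le> \<tau>" using \<tau> by simp
  have "(j has_integral (J \<tau> - J 0)) {0..\<tau>}"
  proof (rule fundamental_theorem_of_calculus[OF \<tau>0])
    fix s assume s: "s \<in> {0..\<tau>}"
    then have sT: "s \<in> {0..T}" using \<tau> by auto
    have "(J has_real_derivative j s) (at s within {0..\<tau>})"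
      by (rule DERIV_subset[OF Jd[OF sT]]) (use \<tau> in auto)
    then show "(J has_vector_derivative j s) (at s within {0..\<tau>})"
      by (simp add: has_real_derivative_iff_has_vector_derivative)
  qed
  then have jint: "integral {0..\<tau>} j = J \<tau> - J 0" by (rule integral_unique)
  have J0: "J 0 = x0" by (simp add: J_def \<Theta>_def I_def)
  have "integral {0..\<tau>} j = \<epsilon> * integral {0..\<tau>} (\<lambda>s. exp (- \<Theta> s) * \<theta> s * Zw s)"
    unfolding j_def using integral_mult_right[of "{0..\<tau>}" \<epsilon> "\<lambda>s. exp (- \<Theta> s) * \<theta> s * Zw s"]
    by (simp add: algebra_simps)
  then have "J \<tau> = x0 + \<epsilon> * integral {0..\<tau>} (\<lambda>s. exp (- \<Theta> s) * \<theta> s * Zw s)"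
    using jint J0 by simp
  then have "I \<tau> + x0 = exp (\<Theta> \<tau>) * (x0 + \<epsilon> * integral {0..\<tau>} (\<lambda>s. exp (- \<Theta> s) * \<theta> s * Zw s))"
    unfolding J_def by (simp add: exp_minus field_simps)
  moreover have "Xw \<tau> = x0 + I \<tau> + \<epsilon> * Zw \<tau>" using eq \<tau> by (simp add: I_def)
  ultimately show ?thesis by (simp add: det_sol_def \<Theta>_def algebra_simps)
qed

lemma continuous_on_integral_upto:
  "continuous_on {0..T} \<theta> \<Longrightarrow> continuous_on {0..T} (\<lambda>s. integral {0..s} (\<theta> :: real \<Rightarrow> real))"
  by (rule indefinite_integral_continuous_1[OF integrable_continuous_real])

lemma sde_deviation_le:
  fixes \<theta> Xw Zw :: "real \<Rightarrow> real"
  assumes \<theta>c: "continuous_on {0..T} \<theta>" and \<theta>L: "\<And>t. t \<in> {0..T} \<Longrightarrow> \<bar>\<theta> t\<bar> \<le> L" and L: "L \<ge> 0"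
    and Xc: "continuous_on {0..T} Xw" and Zc: "continuous_on {0..T} Zw"
    and eq: "\<forall>t\<in>{0..T}. Xw t = x0 + integral {0..t} (\<lambda>s. \<theta> s * Xw s) + \<epsilon> * Zw t"
    and \<tau>: "\<tau> \<in> {0..T}"
  shows "\<bar>Xw \<tau> - det_sol x0 \<theta> \<tau>\<bar> \<le> \<bar>\<epsilon>\<bar> * (\<bar>Zw \<tau>\<bar> + exp (2 * L * T) * L * integral {0..T} (\<lambda>s. \<bar>Zw s\<bar>))"
proof -
  define q where "q = (\<lambda>s. exp (- integral {0..s} \<theta>) * \<theta> s)"
  have qc: "continuous_on {0..T} q"
    unfolding q_def using continuous_on_integral_upto[OF \<theta>c] \<theta>c by (intro continuous_intros)
  have q: "\<bar>q s\<bar> \<le> exp (L * T) * L" if "s \<in> {0..T}" for s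
    unfolding q_def abs_mult using abs_integral_upto_le[OF \<theta>c \<theta>L L that] \<theta>L[OF that]
    by (intro mult_mono) auto
  have i1: "(\<lambda>s. q s * Zw s) integrable_on {0..\<tau>}"
    and i2: "(\<lambda>s. exp (L * T) * L * \<bar>Zw s\<bar>) integrable_on {0..\<tau>}"
    using \<tau> qc Zc by (auto intro!: integrable_continuous_real continuous_intros intro: continuous_on_subset)
  have "norm (integral {0..\<tau>} (\<lambda>s. q s * Zw s)) \<le> integral {0..\<tau>} (\<lambda>s. exp (L * T) * L * \<bar>Zw s\<bar>)"
    by (rule integral_norm_bound_integral[OF i1 i2]) (use q \<tau> in \<open>auto simp: abs_mult intro: mult_right_mono\<close>)
  then have "\<bar>integral {0..\<tau>} (\<lambda>s. q s * Zw s)\<bar> \<le> integral {0..\<tau>} (\<lambda>s. exp (L * T) * L * \<bar>Zw s\<bar>)"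
    by simp
  also have "\<dots> \<le> exp (L * T) * L * integral {0..T} (\<lambda>s. \<bar>Zw s\<bar>)"
    using \<tau> L Zc by (simp, intro mult_left_mono integral_subset_le integrable_continuous_real
        continuous_intros) (auto intro: continuous_on_subset)
  finally have V: "\<bar>integral {0..\<tau>} (\<lambda>s. q s * Zw s)\<bar> \<le> exp (L * T) * L * integral {0..T} (\<lambda>s. \<bar>Zw s\<bar>)" .
  have e: "exp (integral {0..\<tau>} \<theta>) \<le> exp (L * T)"
    using abs_integral_upto_le[OF \<theta>c \<theta>L L \<tau>] by simp
  have "\<bar>exp (integral {0..\<tau>} \<theta>) * integral {0..\<tau>} (\<lambda>s. q s * Zw s)\<bar>
      \<le> exp (L * T) * (exp (L * T) * L * integral {0..T} (\<lambda>s. \<bar>Zw s\<bar>))"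
    unfolding abs_mult using e V by (intro mult_mono) auto
  also have "\<dots> = exp (2 * L * T) * L * integral {0..T} (\<lambda>s. \<bar>Zw s\<bar>)"
    using exp_add[of "L * T" "L * T"] by (simp add: mult.assoc)
  finally have W: "\<bar>exp (integral {0..\<tau>} \<theta>) * integral {0..\<tau>} (\<lambda>s. q s * Zw s)\<bar>
      \<le> exp (2 * L * T) * L * integral {0..T} (\<lambda>s. \<bar>Zw s\<bar>)" .
  have "\<bar>Xw \<tau> - det_sol x0 \<theta> \<tau>\<bar> = \<bar>\<epsilon>\<bar> * \<bar>Zw \<tau> + exp (integral {0..\<tau>} \<theta>) * integral {0..\<tau>} (\<lambda>s. q s * Zw s)\<bar>"
    using sde_variation_of_constants[OF \<theta>c Xc eq \<tau>] by (simp add: q_def abs_mult[symmetric] algebra_simps)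
  also have "\<dots> \<le> \<bar>\<epsilon>\<bar> * (\<bar>Zw \<tau>\<bar> + exp (2 * L * T) * L * integral {0..T} (\<lambda>s. \<bar>Zw s\<bar>))"
    using W by (intro mult_left_mono) auto
  finally show ?thesis .
qed

context compact_kernel
begin

text \<open>Weight of the pathwise bound on the linearisation error \<open>(1/\<phi>) \<integral> G \<theta> (X - x)\<close>: the kernel
  window contributes \<open>|Z|\<close> locally, the deviation \<open>X - x\<close> contributes \<open>c \<integral>\<^sub>0\<^sup>T |Z|\<close> globally.\<close>
definition linearisation_weight :: "real \<Rightarrow> real \<Rightarrow> real \<Rightarrow> real \<Rightarrow> real \<Rightarrow> real" where
  "linearisation_weight T c t \<phi> s =
     indicator {0..T} s * (indicator {t + A * \<phi>..t + B * \<phi>} s / \<phi> + c * (B - A))"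

lemma linearisation_weight_nonneg: "\<phi> > 0 \<Longrightarrow> c \<ge> 0 \<Longrightarrow> linearisation_weight T c t \<phi> s \<ge> 0"
  using support_neg support_pos by (simp add: linearisation_weight_def)

lemma linearisation_weight_borel [measurable]:
  "linearisation_weight T c t \<phi> \<in> borel_measurable borel"
  unfolding linearisation_weight_def[abs_def] by measurable

lemma nn_integral_linearisation_weight_le:
  assumes "\<phi> > 0" and "c \<ge> 0" and "T \<ge> 0"
  shows "(\<integral>\<^sup>+s. ennreal (linearisation_weight T c t \<phi> s) \<partial>lborel) \<le> ennreal ((B - A) * (1 + c * T))"
proof -
  define W where "W = {t + A * \<phi>..t + B * \<phi>}"
  have "(\<integral>\<^sup>+s. ennreal (linearisation_weight T c t \<phi> s) \<partial>lborel)
      \<le> (\<integral>\<^sup>+s. ennreal (1 / \<phi>) * indicator W s + ennreal (c * (B - A)) * indicator {0..T} s \<partial>lborel)"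
    using assms support_neg support_pos
    by (intro nn_integral_mono) (auto simp: linearisation_weight_def W_def indicator_def ennreal_plus)
  also have "\<dots> = ennreal (1 / \<phi>) * (\<integral>\<^sup>+s. indicator W s \<partial>lborel)
      + ennreal (c * (B - A)) * (\<integral>\<^sup>+s. indicator {0..T} s \<partial>lborel)"
    by (subst nn_integral_add) (auto simp: nn_integral_cmult W_def)
  also have "\<dots> = ennreal (1 / \<phi>) * ennreal ((B - A) * \<phi>) + ennreal (c * (B - A)) * ennreal T"
    using assms support_neg support_pos by (simp add: W_def algebra_simps)
  also have "\<dots> = ennreal (B - A) + ennreal (c * (B - A) * T)"
    using assms support_neg support_pos by (simp add: ennreal_mult[symmetric])
  also have "\<dots> = ennreal ((B - A) + c * (B - A) * T)"
    using assms support_neg support_pos by (intro ennreal_plus[symmetric]) auto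
  also have "(B - A) + c * (B - A) * T = (B - A) * (1 + c * T)"
    by (simp add: algebra_simps)
  finally show ?thesis .
qed

lemma integral_linearisation_weight:
  assumes "continuous_on {0..T} Zw"
  shows "(LINT s|lborel. linearisation_weight T c t \<phi> s * \<bar>Zw s\<bar>)
    = (1 / \<phi>) * (LINT s|lborel. indicator {t + A * \<phi>..t + B * \<phi>} s * (indicator {0..T} s * \<bar>Zw s\<bar>))
      + c * (B - A) * integral {0..T} (\<lambda>s. \<bar>Zw s\<bar>)"
proof -
  define Zi where "Zi = (\<lambda>s. indicator {0..T} s * \<bar>Zw s\<bar>)"
  have Zc: "set_integrable lborel {0..T} (\<lambda>s. \<bar>Zw s\<bar>)"
    by (intro borel_integrable_atLeastAtMost' continuous_on_rabs assms)
  then have Zi: "integrable lborel Zi" by (simp add: set_integrable_def Zi_def)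
  have "(LINT s|lborel. linearisation_weight T c t \<phi> s * \<bar>Zw s\<bar>)
      = (LINT s|lborel. (1 / \<phi>) * (indicator {t + A * \<phi>..t + B * \<phi>} s * Zi s) + c * (B - A) * Zi s)"
    by (intro Bochner_Integration.integral_cong)
      (auto simp: linearisation_weight_def Zi_def indicator_def field_simps)
  also have "\<dots> = (1 / \<phi>) * (LINT s|lborel. indicator {t + A * \<phi>..t + B * \<phi>} s * Zi s)
      + c * (B - A) * (LINT s|lborel. Zi s)"
    using integrable_mult_indicator[OF _ Zi, of "{t + A * \<phi>..t + B * \<phi>}"] Zi by simp
  also have "(LINT s|lborel. Zi s) = integral {0..T} (\<lambda>s. \<bar>Zw s\<bar>)"
    using set_borel_integral_eq_integral(2)[OF Zc] by (simp add: Zi_def set_lebesgue_integral_def)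
  finally show ?thesis by (simp add: Zi_def)
qed

lemma abs_linearisation_error_le:
  fixes \<theta> Y Zw :: "real \<Rightarrow> real"
  assumes \<theta>c: "continuous_on {0..T} \<theta>" and \<theta>L: "\<And>\<tau>. \<tau> \<in> {0..T} \<Longrightarrow> \<bar>\<theta> \<tau>\<bar> \<le> L" and "L \<ge> 0"
    and Yc: "continuous_on {0..T} Y" and Zc: "continuous_on {0..T} Zw"
    and "\<phi> > 0" and "c \<ge> 0" and "e \<ge> 0"
    and Y: "\<And>\<tau>. \<tau> \<in> {0..T} \<Longrightarrow> \<bar>Y \<tau>\<bar> \<le> e * (\<bar>Zw \<tau>\<bar> + c * integral {0..T} (\<lambda>s. \<bar>Zw s\<bar>))"
  shows "\<bar>(1 / \<phi>) * integral {0..T} (\<lambda>\<tau>. G ((\<tau> - t) / \<phi>) * (\<theta> \<tau> * Y \<tau>))\<bar>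
           \<le> K * L * e * (LINT s|lborel. linearisation_weight T c t \<phi> s * \<bar>Zw s\<bar>)"
proof -
  define W where "W = {t + A * \<phi>..t + B * \<phi>}"
  define Zi where "Zi = (\<lambda>s. indicator {0..T} s * \<bar>Zw s\<bar>)"
  define Aw where "Aw = integral {0..T} (\<lambda>s. \<bar>Zw s\<bar>)"
  have ZiW: "integrable lborel (\<lambda>s. indicator W s * Zi s)"
    using integrable_mult_indicator[of W lborel Zi] borel_integrable_atLeastAtMost'[of 0 T "\<lambda>s. \<bar>Zw s\<bar>"] Zc
    by (simp add: set_integrable_def Zi_def W_def continuous_on_rabs)
  have Aw0: "Aw \<ge> 0"
    unfolding Aw_def by (rule integral_nonneg) (auto intro: integrable_continuous_real continuous_on_rabs Zc)
  have gi: "set_integrable lborel {0..T} (\<lambda>\<tau>. G ((\<tau> - t) / \<phi>) * (\<theta> \<tau> * Y \<tau>))"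
    using \<theta>c Yc by (intro set_integrable_rescaled continuous_intros)
  have pointwise: "\<bar>indicator {0..T} \<tau> * (G ((\<tau> - t) / \<phi>) * (\<theta> \<tau> * Y \<tau>))\<bar>
      \<le> K * L * e * (indicator W \<tau> * Zi \<tau> + c * Aw * indicator W \<tau>)" for \<tau>
  proof (cases "\<tau> \<in> {0..T} \<and> \<tau> \<in> W")
    case True
    have "\<bar>G ((\<tau> - t) / \<phi>) * (\<theta> \<tau> * Y \<tau>)\<bar> \<le> K * (L * (e * (\<bar>Zw \<tau>\<bar> + c * Aw)))"
      unfolding abs_mult using abs_G_le \<theta>L[of \<tau>] Y[of \<tau>] True K_nonneg \<open>L \<ge> 0\<close>
      by (intro mult_mono) (auto simp: Aw_def)
    then show ?thesis using True by (simp add: Zi_def algebra_simps)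
  next
    case False
    then have "indicator {0..T} \<tau> * G ((\<tau> - t) / \<phi>) = 0"
      using G_outside[of "(\<tau> - t) / \<phi>"] \<open>\<phi> > 0\<close> by (auto simp: W_def field_simps)
    then have "indicator {0..T} \<tau> * (G ((\<tau> - t) / \<phi>) * (\<theta> \<tau> * Y \<tau>)) = 0"
      by (metis mult.assoc mult_zero_left)
    moreover have "0 \<le> K * L * e * (indicator W \<tau> * Zi \<tau> + c * Aw * indicator W \<tau>)"
      using K_nonneg \<open>L \<ge> 0\<close> \<open>e \<ge> 0\<close> \<open>c \<ge> 0\<close> Aw0 by (simp add: Zi_def)
    ultimately show ?thesis by (metis abs_zero)
  qed
  have "\<bar>integral {0..T} (\<lambda>\<tau>. G ((\<tau> - t) / \<phi>) * (\<theta> \<tau> * Y \<tau>))\<bar>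
      = \<bar>LINT \<tau>|lborel. indicator {0..T} \<tau> * (G ((\<tau> - t) / \<phi>) * (\<theta> \<tau> * Y \<tau>))\<bar>"
    using set_borel_integral_eq_integral(2)[OF gi] by (simp add: set_lebesgue_integral_def)
  also have "\<dots> \<le> (LINT \<tau>|lborel. K * L * e * (indicator W \<tau> * Zi \<tau> + c * Aw * indicator W \<tau>))"
    using gi pointwise ZiW support_neg support_pos \<open>\<phi> > 0\<close>
    by (intro order_trans[OF integral_abs_bound integral_mono])
      (auto simp: set_integrable_def W_def)
  also have "\<dots> = K * L * e * ((LINT \<tau>|lborel. indicator W \<tau> * Zi \<tau>) + c * Aw * ((B - A) * \<phi>))"
    using ZiW support_neg support_pos \<open>\<phi> > 0\<close> by (simp add: W_def algebra_simps)
  finally have "\<bar>(1 / \<phi>) * integral {0..T} (\<lambda>\<tau>. G ((\<tau> - t) / \<phi>) * (\<theta> \<tau> * Y \<tau>))\<bar>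
      \<le> (1 / \<phi>) * (K * L * e * ((LINT \<tau>|lborel. indicator W \<tau> * Zi \<tau>) + c * Aw * ((B - A) * \<phi>)))"
    using \<open>\<phi> > 0\<close> by (simp add: abs_mult divide_right_mono)
  also have "\<dots> = K * L * e * (LINT s|lborel. linearisation_weight T c t \<phi> s * \<bar>Zw s\<bar>)"
    unfolding integral_linearisation_weight[OF Zc] using \<open>\<phi> > 0\<close>
    by (simp add: W_def Zi_def Aw_def field_simps)
  finally show ?thesis .
qed

end

section \<open>Measurability\<close>

lemma floor_grid_bounds:
  fixes T s :: real and n :: nat
  assumes "T > 0" and "s \<ge> 0"
  defines "r \<equiv> T * real_of_int \<lfloor>s * real (Suc n) / T\<rfloor> / real (Suc n)"
  shows "s - T / real (Suc n) \<le> r" and "r \<le> s" and "0 \<le> r"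
proof -
  define y where "y = s * real (Suc n) / T"
  have y: "y - 1 \<le> real_of_int \<lfloor>y\<rfloor>" "real_of_int \<lfloor>y\<rfloor> \<le> y" "0 \<le> real_of_int \<lfloor>y\<rfloor>"
    using assms(1,2) by (auto simp: y_def)
  have r: "r = T / real (Suc n) * real_of_int \<lfloor>y\<rfloor>" by (simp add: r_def y_def)
  have sy: "T / real (Suc n) * y = s" using assms(1) by (simp add: y_def)
  have c: "T / real (Suc n) > 0" using assms(1) by simp
  have "T / real (Suc n) * (y - 1) \<le> r"
    unfolding r by (rule mult_left_mono[OF y(1) less_imp_le[OF c]])
  then show "s - T / real (Suc n) \<le> r" using sy by (simp add: right_diff_distrib)
  have "r \<le> T / real (Suc n) * y"
    unfolding r by (rule mult_left_mono[OF y(2) less_imp_le[OF c]])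
  then show "r \<le> s" using sy by simp
  show "0 \<le> r" unfolding r using y(3) c by (intro mult_nonneg_nonneg) auto
qed

text \<open>The process is the pointwise limit of its piecewise constant interpolations on the grids
  \<open>T \<int> / (n + 1)\<close>.\<close>
lemma continuous_process_jointly_measurable:
  fixes F :: "real \<Rightarrow> 'a \<Rightarrow> real"
  assumes T: "T > 0" and cont: "\<And>\<omega>. \<omega> \<in> space M \<Longrightarrow> continuous_on {0..T} (\<lambda>s. F s \<omega>)"
    and meas: "\<And>s. s \<in> {0..T} \<Longrightarrow> F s \<in> borel_measurable M"
  shows "(\<lambda>p. indicator {0..T} (snd p) * F (snd p) (fst p)) \<in> borel_measurable (M \<Otimes>\<^sub>M lborel)"
proof -
  define q where "q = (\<lambda>(n::nat) (i::int). max 0 (min T (T * real_of_int i / real (Suc n))))"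
  define g where "g = (\<lambda>(n::nat) (p::'a \<times> real). \<lfloor>snd p * real (Suc n) / T\<rfloor>)"
  define u where "u = (\<lambda>n p. indicator {0..T} (snd p) * F (q n (g n p)) (fst p))"
  have um: "u n \<in> borel_measurable (M \<Otimes>\<^sub>M lborel)" for n
  proof -
    have "F (q n i) \<in> borel_measurable M" for i using meas T by (simp add: q_def)
    then have "(\<lambda>p. indicator {0..T} (snd p) * F (q n i) (fst p)) \<in> borel_measurable (M \<Otimes>\<^sub>M lborel)" for i
      by measurable
    moreover have "g n \<in> measurable (M \<Otimes>\<^sub>M lborel) (count_space UNIV)"
      unfolding g_def by measurable
    ultimately show ?thesis
      unfolding u_def by (rule measurable_compose_countable'[where I=UNIV]) auto
  qed
  show ?thesis
  proof (rule borel_measurable_LIMSEQ_real[OF _ um])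
    fix p :: "'a \<times> real" assume p: "p \<in> space (M \<Otimes>\<^sub>M lborel)"
    obtain \<omega> s where ps: "p = (\<omega>, s)" by (cases p)
    have \<omega>: "\<omega> \<in> space M" using p ps by (simp add: space_pair_measure)
    show "(\<lambda>n. u n p) \<longlonglongrightarrow> indicator {0..T} (snd p) * F (snd p) (fst p)"
    proof (cases "s \<in> {0..T}")
      case True
      define r where "r = (\<lambda>n. T * real_of_int \<lfloor>s * real (Suc n) / T\<rfloor> / real (Suc n))"
      note grid = floor_grid_bounds[OF T, of s]
      have rin: "r n \<in> {0..T}" for n using grid[of n] True by (auto simp: r_def)
      have qr: "q n (g n (\<omega>, s)) = r n" for n using rin[of n] by (simp add: q_def g_def r_def)
      have "(\<lambda>n. s - T / real (Suc n)) \<longlonglongrightarrow> s - 0"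
        using tendsto_mult_right_zero[OF LIMSEQ_inverse_real_of_nat, of T]
        by (intro tendsto_diff) (simp_all add: divide_inverse)
      then have "r \<longlonglongrightarrow> s"
        using grid True by (rule_tac tendsto_sandwich[of "\<lambda>n. s - T / real (Suc n)" _ _ "\<lambda>n. s"]) (auto simp: r_def)
      then have "(\<lambda>n. F (r n) \<omega>) \<longlonglongrightarrow> F s \<omega>"
        using continuous_on_tendsto_compose[OF cont[OF \<omega>], of r s sequentially] True rin by auto
      then show ?thesis using True by (simp add: u_def ps qr)
    qed (simp add: u_def ps)
  qed
qed

lemma measurable_integral_process:
  fixes F :: "real \<Rightarrow> 'a \<Rightarrow> real" and h :: "real \<Rightarrow> real"
  assumes F: "(\<lambda>p. indicator {0..T} (snd p) * F (snd p) (fst p)) \<in> borel_measurable (M \<Otimes>\<^sub>M lborel)"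
    and h: "(\<lambda>s. indicator S s * h s) \<in> borel_measurable borel" and "S \<subseteq> {0..T}"
    and int: "\<And>\<omega>. \<omega> \<in> space M \<Longrightarrow> set_integrable lborel S (\<lambda>s. h s * F s \<omega>)"
  shows "(\<lambda>\<omega>. integral S (\<lambda>s. h s * F s \<omega>)) \<in> borel_measurable M"
proof -
  define f where "f = (\<lambda>\<omega> s. (indicator S s * h s) * (indicator {0..T} s * F s \<omega>))"
  have "(\<lambda>p. indicator S (snd p) * h (snd p)) \<in> borel_measurable (M \<Otimes>\<^sub>M lborel)"
    by (rule measurable_compose[OF measurable_snd]) (use h in simp)
  then have "case_prod f \<in> borel_measurable (M \<Otimes>\<^sub>M lborel)"
    using F unfolding f_def case_prod_beta' by measurable
  then have "(\<lambda>\<omega>. \<integral>s. f \<omega> s \<partial>lborel) \<in> borel_measurable M"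
    by (rule lborel.borel_measurable_lebesgue_integral)
  moreover have "(\<integral>s. f \<omega> s \<partial>lborel) = integral S (\<lambda>s. h s * F s \<omega>)" if "\<omega> \<in> space M" for \<omega>
  proof -
    have "(\<integral>s. f \<omega> s \<partial>lborel) = (LINT s:S|lborel. h s * F s \<omega>)"
      unfolding set_lebesgue_integral_def f_def using \<open>S \<subseteq> {0..T}\<close>
      by (intro Bochner_Integration.integral_cong) (auto simp: indicator_def)
    also have "\<dots> = integral S (\<lambda>s. h s * F s \<omega>)"
      by (rule set_borel_integral_eq_integral(2)[OF int[OF that]])
    finally show ?thesis .
  qed
  ultimately show ?thesis by (rule measurable_cong[THEN iffD1, rotated]) auto
qed

context hermite_noise
begin

lemma Z_continuous_on: "\<omega> \<in> space M \<Longrightarrow> continuous_on {0..T} (\<lambda>t. Z t \<omega>)"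
  using Z_continuous by (rule continuous_on_subset) auto

lemma Z_jointly_measurable:
  "T > 0 \<Longrightarrow> (\<lambda>p. indicator {0..T} (snd p) * Z (snd p) (fst p)) \<in> borel_measurable (M \<Otimes>\<^sub>M lborel)"
  using Z_borel by (intro continuous_process_jointly_measurable Z_continuous_on) auto

lemma solves_sde_measurable:
  assumes T: "T > 0" and \<theta>c: "continuous_on {0..T} \<theta>" and sde: "solves_sde M T x0 \<epsilon> \<theta> Z X"
  shows "\<And>\<tau>. \<tau> \<in> {0..T} \<Longrightarrow> X \<tau> \<in> borel_measurable M"
    and "(\<lambda>p. indicator {0..T} (snd p) * X (snd p) (fst p)) \<in> borel_measurable (M \<Otimes>\<^sub>M lborel)"
proof -
  have Xc: "\<And>\<omega>. \<omega> \<in> space M \<Longrightarrow> continuous_on {0..T} (\<lambda>s. X s \<omega>)"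
    and Xeq: "\<And>\<omega>. \<omega> \<in> space M \<Longrightarrow> \<forall>t\<in>{0..T}. X t \<omega> = x0 + integral {0..t} (\<lambda>s. \<theta> s * X s \<omega>) + \<epsilon> * Z t \<omega>"
    using sde unfolding solves_sde_def by auto
  define q where "q = (\<lambda>s. exp (- integral {0..s} \<theta>) * \<theta> s)"
  have qc: "continuous_on {0..T} q"
    unfolding q_def using continuous_on_integral_upto[OF \<theta>c] \<theta>c by (intro continuous_intros)
  show Xm: "X \<tau> \<in> borel_measurable M" if \<tau>: "\<tau> \<in> {0..T}" for \<tau>
  proof -
    have Vm: "(\<lambda>\<omega>. integral {0..\<tau>} (\<lambda>s. q s * Z s \<omega>)) \<in> borel_measurable M"
    proof (rule measurable_integral_process[OF Z_jointly_measurable[OF T]])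
      show "(\<lambda>s. indicator {0..\<tau>} s * q s) \<in> borel_measurable borel"
        using borel_measurable_continuous_on_indicator[OF _ continuous_on_subset[OF qc]] \<tau> by auto
      show "set_integrable lborel {0..\<tau>} (\<lambda>s. q s * Z s \<omega>)" if "\<omega> \<in> space M" for \<omega>
        using qc Z_continuous_on[OF that] \<tau>
        by (intro borel_integrable_atLeastAtMost' continuous_intros) (auto intro: continuous_on_subset)
    qed (use \<tau> in auto)
    moreover have Zm: "Z \<tau> \<in> borel_measurable M" using Z_borel \<tau> by simp
    ultimately have "(\<lambda>\<omega>. det_sol x0 \<theta> \<tau> + \<epsilon> * Z \<tau> \<omega> + \<epsilon> * exp (integral {0..\<tau>} \<theta>) * integral {0..\<tau>} (\<lambda>s. q s * Z s \<omega>))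
        \<in> borel_measurable M" by measurable
    moreover have "det_sol x0 \<theta> \<tau> + \<epsilon> * Z \<tau> \<omega> + \<epsilon> * exp (integral {0..\<tau>} \<theta>) * integral {0..\<tau>} (\<lambda>s. q s * Z s \<omega>)
        = X \<tau> \<omega>" if "\<omega> \<in> space M" for \<omega>
      using sde_variation_of_constants[OF \<theta>c Xc[OF that] Xeq[OF that] \<tau>] by (simp add: q_def)
    ultimately show ?thesis by (rule measurable_cong[THEN iffD1, rotated]) auto
  qed
  show "(\<lambda>p. indicator {0..T} (snd p) * X (snd p) (fst p)) \<in> borel_measurable (M \<Otimes>\<^sub>M lborel)"
    by (rule continuous_process_jointly_measurable[OF T Xc Xm])
qed

end

section \<open>Mean squared error\<close>

lemma ennreal_integral_le_nn_integral:
  fixes f :: "'a \<Rightarrow> real"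
  assumes "\<And>x. f x \<ge> 0"
  shows "ennreal (integral\<^sup>L M f) \<le> (\<integral>\<^sup>+x. ennreal (f x) \<partial>M)"
proof (cases "integrable M f")
  case True
  then show ?thesis using assms by (simp add: nn_integral_eq_integral)
qed (simp add: not_integrable_integral_eq)

lemma nn_integral_weighted_square_le:
  fixes k y :: "'b \<Rightarrow> real"
  assumes "k \<in> borel_measurable N" and "y \<in> borel_measurable N" and "\<And>s. k s \<ge> 0"
  shows "(\<integral>\<^sup>+s. ennreal (k s * \<bar>y s\<bar>) \<partial>N)\<^sup>2
           \<le> (\<integral>\<^sup>+s. ennreal (k s) \<partial>N) * (\<integral>\<^sup>+s. ennreal (k s * (y s)\<^sup>2) \<partial>N)"
proof -
  note [measurable] = assms(1,2)
  have "(\<lambda>s. ennreal (k s * \<bar>y s\<bar>)) = (\<lambda>s. ennreal (sqrt (k s)) * ennreal (sqrt (k s) * \<bar>y s\<bar>))"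
    using assms(3) by (simp add: fun_eq_iff ennreal_mult[symmetric] mult.assoc[symmetric])
  then have "(\<integral>\<^sup>+s. ennreal (k s * \<bar>y s\<bar>) \<partial>N)\<^sup>2
      \<le> (\<integral>\<^sup>+s. (ennreal (sqrt (k s)))\<^sup>2 \<partial>N) * (\<integral>\<^sup>+s. (ennreal (sqrt (k s) * \<bar>y s\<bar>))\<^sup>2 \<partial>N)"
    by (simp only:) (rule Cauchy_Schwarz_nn_integral; measurable)
  also have "\<dots> = (\<integral>\<^sup>+s. ennreal (k s) \<partial>N) * (\<integral>\<^sup>+s. ennreal (k s * (y s)\<^sup>2) \<partial>N)"
    using assms(3) by (simp add: ennreal_power power_mult_distrib)
  finally show ?thesis .
qed

lemma (in sigma_finite_measure) nn_integral_square_le_weighted: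
  fixes R :: "'a \<Rightarrow> real" and k :: "real \<Rightarrow> real" and Y :: "real \<Rightarrow> 'a \<Rightarrow> real"
  assumes k: "k \<in> borel_measurable borel" "\<And>s. k s \<ge> 0"
    and \<kappa>: "(\<integral>\<^sup>+s. ennreal (k s) \<partial>lborel) \<le> ennreal \<kappa>" "\<kappa> \<ge> 0"
    and Y: "(\<lambda>p. Y (snd p) (fst p)) \<in> borel_measurable (M \<Otimes>\<^sub>M lborel)"
    and V: "\<And>s. k s \<noteq> 0 \<Longrightarrow> (\<integral>\<^sup>+\<omega>. ennreal ((Y s \<omega>)\<^sup>2) \<partial>M) \<le> ennreal V" "V \<ge> 0"
    and R: "\<And>\<omega>. \<omega> \<in> space M \<Longrightarrow> ennreal \<bar>R \<omega>\<bar> \<le> (\<integral>\<^sup>+s. ennreal (k s * \<bar>Y s \<omega>\<bar>) \<partial>lborel)"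
  shows "(\<integral>\<^sup>+\<omega>. ennreal ((R \<omega>)\<^sup>2) \<partial>M) \<le> ennreal (\<kappa>\<^sup>2 * V)"
proof -
  interpret P: pair_sigma_finite M lborel by unfold_locales
  define I where "I = (\<lambda>\<omega>. \<integral>\<^sup>+s. ennreal (k s * (Y s \<omega>)\<^sup>2) \<partial>lborel)"
  have kY: "(\<lambda>p. ennreal (k (snd p) * (Y (snd p) (fst p))\<^sup>2)) \<in> borel_measurable (M \<Otimes>\<^sub>M lborel)"
    using Y k(1) by measurable
  have pointwise: "ennreal ((R \<omega>)\<^sup>2) \<le> ennreal \<kappa> * I \<omega>" if \<omega>: "\<omega> \<in> space M" for \<omega>
  proof -
    have "(\<lambda>s. Y s \<omega>) \<in> borel_measurable lborel" using measurable_Pair2[OF Y \<omega>] by simp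
    then have "(\<integral>\<^sup>+s. ennreal (k s * \<bar>Y s \<omega>\<bar>) \<partial>lborel)\<^sup>2 \<le> (\<integral>\<^sup>+s. ennreal (k s) \<partial>lborel) * I \<omega>"
      unfolding I_def using k by (intro nn_integral_weighted_square_le) auto
    moreover have "ennreal ((R \<omega>)\<^sup>2) = (ennreal \<bar>R \<omega>\<bar>)\<^sup>2" by (simp add: ennreal_power)
    moreover have "(ennreal \<bar>R \<omega>\<bar>)\<^sup>2 \<le> (\<integral>\<^sup>+s. ennreal (k s * \<bar>Y s \<omega>\<bar>) \<partial>lborel)\<^sup>2"
      using R[OF \<omega>] by (rule power_mono) simp
    moreover have "(\<integral>\<^sup>+s. ennreal (k s) \<partial>lborel) * I \<omega> \<le> ennreal \<kappa> * I \<omega>"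
      using \<kappa>(1) by (rule mult_right_mono) simp
    ultimately show ?thesis by (metis order_trans)
  qed
  have "(\<integral>\<^sup>+\<omega>. I \<omega> \<partial>M) = (\<integral>\<^sup>+s. (\<integral>\<^sup>+\<omega>. ennreal (k s * (Y s \<omega>)\<^sup>2) \<partial>M) \<partial>lborel)"
    using P.Fubini[OF kY] by (simp add: I_def)
  also have "\<dots> \<le> (\<integral>\<^sup>+s. ennreal (k s) * ennreal V \<partial>lborel)"
  proof (intro nn_integral_mono)
    fix s
    show "(\<integral>\<^sup>+\<omega>. ennreal (k s * (Y s \<omega>)\<^sup>2) \<partial>M) \<le> ennreal (k s) * ennreal V"
    proof (cases "k s = 0")
      case False
      have "(\<integral>\<^sup>+\<omega>. ennreal (k s * (Y s \<omega>)\<^sup>2) \<partial>M) = ennreal (k s) * (\<integral>\<^sup>+\<omega>. ennreal ((Y s \<omega>)\<^sup>2) \<partial>M)"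
        using k(2)[of s] measurable_Pair1[OF Y, of s]
        by (subst nn_integral_cmult[symmetric]) (auto simp: ennreal_mult)
      then show ?thesis using V(1)[OF False] by (simp add: mult_left_mono)
    qed simp
  qed
  also have "\<dots> = ennreal V * (\<integral>\<^sup>+s. ennreal (k s) \<partial>lborel)"
    using k(1) by (simp add: nn_integral_cmult[symmetric] mult.commute)
  also have "\<dots> \<le> ennreal V * ennreal \<kappa>" by (intro mult_left_mono \<kappa>(1)) simp
  finally have EI: "(\<integral>\<^sup>+\<omega>. I \<omega> \<partial>M) \<le> ennreal V * ennreal \<kappa>" .
  have "(\<integral>\<^sup>+\<omega>. ennreal ((R \<omega>)\<^sup>2) \<partial>M) \<le> (\<integral>\<^sup>+\<omega>. ennreal \<kappa> * I \<omega> \<partial>M)"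
    using pointwise by (intro nn_integral_mono_AE AE_I2) simp
  also have "\<dots> = ennreal \<kappa> * (\<integral>\<^sup>+\<omega>. I \<omega> \<partial>M)"
    using lborel.borel_measurable_nn_integral_fst[OF kY] by (simp add: nn_integral_cmult I_def)
  also have "\<dots> \<le> ennreal \<kappa> * (ennreal V * ennreal \<kappa>)" by (intro mult_left_mono EI) simp
  also have "\<dots> = ennreal (\<kappa>\<^sup>2 * V)"
    using \<kappa>(2) V(2) by (simp add: ennreal_mult[symmetric] power2_eq_square mult_ac)
  finally show ?thesis .
qed

lemma (in hermite_noise) nn_integral_Z_square_le:
  assumes "H > 0" and "s \<in> {0..T}"
  shows "(\<integral>\<^sup>+\<omega>. ennreal ((Z s \<omega>)\<^sup>2) \<partial>M) \<le> ennreal (T powr (2 * H))"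
proof -
  have "(\<integral>\<^sup>+\<omega>. ennreal ((Z s \<omega>)\<^sup>2) \<partial>M) = ennreal (s powr (2 * H))"
    using integrable_Z_square[of s] Z_variance[of s] assms(2) by (simp add: nn_integral_eq_integral)
  also have "\<dots> \<le> ennreal (T powr (2 * H))"
    using assms by (intro ennreal_leI powr_mono2) auto
  finally show ?thesis .
qed

context hermite_kernel
begin

lemma linearisation_error_pathwise:
  assumes \<theta>c: "continuous_on {0..T} \<theta>" and \<theta>L: "\<And>\<tau>. \<tau> \<in> {0..T} \<Longrightarrow> \<bar>\<theta> \<tau>\<bar> \<le> L" and L: "L \<ge> 0"
    and sde: "solves_sde M T x0 \<epsilon> \<theta> Z X" and \<phi>: "\<phi> > 0" and \<omega>: "\<omega> \<in> space M"
  shows "\<bar>(1 / \<phi>) * integral {0..T} (\<lambda>\<tau>. G ((\<tau> - t) / \<phi>) * (\<theta> \<tau> * (X \<tau> \<omega> - det_sol x0 \<theta> \<tau>)))\<bar>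
    \<le> K * L * \<bar>\<epsilon>\<bar> * (LINT s|lborel. linearisation_weight T (exp (2 * L * T) * L) t \<phi> s * \<bar>Z s \<omega>\<bar>)"
proof (rule abs_linearisation_error_le[OF \<theta>c \<theta>L L _ Z_continuous_on[OF \<omega>] \<phi>])
  have Xc: "continuous_on {0..T} (\<lambda>s. X s \<omega>)"
    and Xeq: "\<forall>s\<in>{0..T}. X s \<omega> = x0 + integral {0..s} (\<lambda>r. \<theta> r * X r \<omega>) + \<epsilon> * Z s \<omega>"
    using sde \<omega> unfolding solves_sde_def by auto
  show "continuous_on {0..T} (\<lambda>\<tau>. X \<tau> \<omega> - det_sol x0 \<theta> \<tau>)"
    using Xc continuous_on_det_sol[OF \<theta>c] by (intro continuous_intros)
  show "\<bar>X \<tau> \<omega> - det_sol x0 \<theta> \<tau>\<bar> \<le> \<bar>\<epsilon>\<bar> * (\<bar>Z \<tau> \<omega>\<bar> + exp (2 * L * T) * L * integral {0..T} (\<lambda>s. \<bar>Z s \<omega>\<bar>))"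
    if "\<tau> \<in> {0..T}" for \<tau>
    by (rule sde_deviation_le[OF \<theta>c \<theta>L L Xc Z_continuous_on[OF \<omega>] Xeq that])
qed (use L in auto)

lemma linearisation_error_L2:
  assumes "H > 0" and T: "T > 0" and \<theta>c: "continuous_on {0..T} \<theta>"
    and \<theta>L: "\<And>\<tau>. \<tau> \<in> {0..T} \<Longrightarrow> \<bar>\<theta> \<tau>\<bar> \<le> L" and L: "L \<ge> 0"
    and sde: "solves_sde M T x0 \<epsilon> \<theta> Z X" and \<phi>: "\<phi> > 0"
  shows "(\<integral>\<^sup>+\<omega>. ennreal (((1 / \<phi>) * integral {0..T}
            (\<lambda>\<tau>. G ((\<tau> - t) / \<phi>) * (\<theta> \<tau> * (X \<tau> \<omega> - det_sol x0 \<theta> \<tau>))))\<^sup>2) \<partial>M)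
    \<le> ennreal ((K * L * \<epsilon>)\<^sup>2 * ((B - A) * (1 + exp (2 * L * T) * L * T))\<^sup>2 * T powr (2 * H))"
proof -
  define c where "c = exp (2 * L * T) * L"
  define e where "e = K * L * \<bar>\<epsilon>\<bar>"
  define k where "k = (\<lambda>s. e * linearisation_weight T c t \<phi> s)"
  have c: "c \<ge> 0" and e: "e \<ge> 0" using L K_nonneg by (simp_all add: c_def e_def)
  have k0: "k s \<ge> 0" for s using linearisation_weight_nonneg[OF \<phi> c] e by (simp add: k_def)
  have "(\<integral>\<^sup>+s. ennreal (k s) \<partial>lborel) = ennreal e * (\<integral>\<^sup>+s. ennreal (linearisation_weight T c t \<phi> s) \<partial>lborel)"
    using e linearisation_weight_nonneg[OF \<phi> c]
    by (subst nn_integral_cmult[symmetric]) (auto simp: k_def ennreal_mult)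
  also have "\<dots> \<le> ennreal e * ennreal ((B - A) * (1 + c * T))"
    using nn_integral_linearisation_weight_le[OF \<phi> c] T by (intro mult_left_mono) auto
  also have "\<dots> = ennreal (e * ((B - A) * (1 + c * T)))"
    using e c T support_neg support_pos by (simp add: ennreal_mult)
  finally have \<kappa>: "(\<integral>\<^sup>+s. ennreal (k s) \<partial>lborel) \<le> ennreal (e * ((B - A) * (1 + c * T)))" .
  have V: "(\<integral>\<^sup>+\<omega>. ennreal ((indicator {0..T} s * Z s \<omega>)\<^sup>2) \<partial>M) \<le> ennreal (T powr (2 * H))"
    if "k s \<noteq> 0" for s
  proof -
    have "s \<in> {0..T}"
      using that by (auto simp: k_def linearisation_weight_def split: split_indicator_asm)
    then show ?thesis using nn_integral_Z_square_le[OF \<open>H > 0\<close>] by simp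
  qed
  have R: "ennreal \<bar>(1 / \<phi>) * integral {0..T} (\<lambda>\<tau>. G ((\<tau> - t) / \<phi>) * (\<theta> \<tau> * (X \<tau> \<omega> - det_sol x0 \<theta> \<tau>)))\<bar>
      \<le> (\<integral>\<^sup>+s. ennreal (k s * \<bar>indicator {0..T} s * Z s \<omega>\<bar>) \<partial>lborel)" if \<omega>: "\<omega> \<in> space M" for \<omega>
  proof -
    have "(LINT s|lborel. k s * \<bar>indicator {0..T} s * Z s \<omega>\<bar>)
        = (LINT s|lborel. e * (linearisation_weight T c t \<phi> s * \<bar>Z s \<omega>\<bar>))"
      by (intro Bochner_Integration.integral_cong)
        (auto simp: k_def linearisation_weight_def split: split_indicator)
    also have "\<dots> = e * (LINT s|lborel. linearisation_weight T c t \<phi> s * \<bar>Z s \<omega>\<bar>)" by simp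
    finally show ?thesis
      using linearisation_error_pathwise[OF \<theta>c \<theta>L L sde \<phi> \<omega>, of t]
        ennreal_integral_le_nn_integral[of "\<lambda>s. k s * \<bar>indicator {0..T} s * Z s \<omega>\<bar>" lborel] k0
      by (auto simp: c_def e_def intro: order_trans ennreal_leI)
  qed
  have "(\<integral>\<^sup>+\<omega>. ennreal (((1 / \<phi>) * integral {0..T}
            (\<lambda>\<tau>. G ((\<tau> - t) / \<phi>) * (\<theta> \<tau> * (X \<tau> \<omega> - det_sol x0 \<theta> \<tau>))))\<^sup>2) \<partial>M)
      \<le> ennreal ((e * ((B - A) * (1 + c * T)))\<^sup>2 * T powr (2 * H))"
  proof (rule nn_integral_square_le_weighted[OF _ k0 \<kappa> _ Z_jointly_measurable[OF T] V _ R])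
    show "k \<in> borel_measurable borel" unfolding k_def by measurable
    show "0 \<le> e * ((B - A) * (1 + c * T))" using e c T support_neg support_pos by simp
  qed auto
  also have "(e * ((B - A) * (1 + c * T)))\<^sup>2 = (K * L * \<epsilon>)\<^sup>2 * ((B - A) * (1 + exp (2 * L * T) * L * T))\<^sup>2"
    by (simp add: e_def c_def power_mult_distrib)
  finally show ?thesis .
qed

end

lemma (in prob_space) integral_square_sum3_le:
  fixes D R N :: "'a \<Rightarrow> real"
  assumes "D \<in> borel_measurable M" and split: "\<And>\<omega>. \<omega> \<in> space M \<Longrightarrow> D \<omega> = b + R \<omega> + N \<omega>"
    and R: "integrable M (\<lambda>\<omega>. (R \<omega>)\<^sup>2)" and N: "integrable M (\<lambda>\<omega>. (N \<omega>)\<^sup>2)"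
  shows "integrable M (\<lambda>\<omega>. (D \<omega>)\<^sup>2)"
    and "(\<integral>\<omega>. (D \<omega>)\<^sup>2 \<partial>M) \<le> 3 * (b\<^sup>2 + (\<integral>\<omega>. (R \<omega>)\<^sup>2 \<partial>M) + (\<integral>\<omega>. (N \<omega>)\<^sup>2 \<partial>M))"
proof -
  define F where "F = (\<lambda>\<omega>. 3 * (b\<^sup>2 + (R \<omega>)\<^sup>2 + (N \<omega>)\<^sup>2))"
  have F: "integrable M F" unfolding F_def using R N by simp
  have "(x + y + z)\<^sup>2 \<le> 3 * (x\<^sup>2 + y\<^sup>2 + z\<^sup>2)" for x y z :: real
  proof -
    have "3 * (x\<^sup>2 + y\<^sup>2 + z\<^sup>2) - (x + y + z)\<^sup>2 = (x - y)\<^sup>2 + (y - z)\<^sup>2 + (x - z)\<^sup>2"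
      by (simp add: power2_eq_square algebra_simps)
    moreover have "0 \<le> (x - y)\<^sup>2 + (y - z)\<^sup>2 + (x - z)\<^sup>2" by simp
    ultimately show ?thesis by linarith
  qed
  then have DF: "(D \<omega>)\<^sup>2 \<le> F \<omega>" if "\<omega> \<in> space M" for \<omega>
    using split[OF that] by (simp add: F_def)
  have "AE \<omega> in M. norm ((D \<omega>)\<^sup>2) \<le> norm (F \<omega>)"
    using DF by (intro AE_I2) (simp, meson abs_ge_self order_trans)
  then show D: "integrable M (\<lambda>\<omega>. (D \<omega>)\<^sup>2)"
    using assms(1) by (intro Bochner_Integration.integrable_bound[OF F]) auto
  have "(\<integral>\<omega>. (D \<omega>)\<^sup>2 \<partial>M) \<le> (\<integral>\<omega>. F \<omega> \<partial>M)"
    using DF by (intro integral_mono_AE D F AE_I2) auto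
  also have "\<dots> = 3 * (b\<^sup>2 + (\<integral>\<omega>. (R \<omega>)\<^sup>2 \<partial>M) + (\<integral>\<omega>. (N \<omega>)\<^sup>2 \<partial>M))"
    unfolding F_def using R N by (simp add: prob_space)
  finally show "(\<integral>\<omega>. (D \<omega>)\<^sup>2 \<partial>M) \<le> 3 * (b\<^sup>2 + (\<integral>\<omega>. (R \<omega>)\<^sup>2 \<partial>M) + (\<integral>\<omega>. (N \<omega>)\<^sup>2 \<partial>M))" .
qed

lemma (in compact_kernel) kernel_est_split:
  assumes \<theta>c: "continuous_on {0..T} \<theta>" and Xc: "continuous_on {0..T} (\<lambda>s. X s \<omega>)"
  shows "kernel_est G \<phi> T \<epsilon> \<theta> X WI t \<omega> - \<theta> t * det_sol x0 \<theta> t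
    = ((1 / \<phi>) * integral {0..T} (\<lambda>\<tau>. G ((\<tau> - t) / \<phi>) * \<theta> \<tau> * det_sol x0 \<theta> \<tau>) - \<theta> t * det_sol x0 \<theta> t)
      + (1 / \<phi>) * integral {0..T} (\<lambda>\<tau>. G ((\<tau> - t) / \<phi>) * (\<theta> \<tau> * (X \<tau> \<omega> - det_sol x0 \<theta> \<tau>)))
      + (\<epsilon> / \<phi>) * WI (\<lambda>\<tau>. G ((\<tau> - t) / \<phi>) * indicator {0..T} \<tau>) \<omega>"
proof -
  have xc: "continuous_on {0..T} (det_sol x0 \<theta>)" by (rule continuous_on_det_sol[OF \<theta>c])
  have "(\<lambda>\<tau>. G ((\<tau> - t) / \<phi>) * (\<theta> \<tau> * det_sol x0 \<theta> \<tau>)) integrable_on {0..T}"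
    "(\<lambda>\<tau>. G ((\<tau> - t) / \<phi>) * (\<theta> \<tau> * (X \<tau> \<omega> - det_sol x0 \<theta> \<tau>))) integrable_on {0..T}"
    using \<theta>c xc Xc
    by (auto intro!: set_borel_integral_eq_integral(1) set_integrable_rescaled continuous_intros)
  then have "integral {0..T} (\<lambda>\<tau>. G ((\<tau> - t) / \<phi>) * \<theta> \<tau> * X \<tau> \<omega>)
      = integral {0..T} (\<lambda>\<tau>. G ((\<tau> - t) / \<phi>) * (\<theta> \<tau> * det_sol x0 \<theta> \<tau>))
        + integral {0..T} (\<lambda>\<tau>. G ((\<tau> - t) / \<phi>) * (\<theta> \<tau> * (X \<tau> \<omega> - det_sol x0 \<theta> \<tau>)))"
    by (subst integral_add[symmetric]) (auto intro!: integral_cong simp: algebra_simps)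
  then show ?thesis by (simp add: kernel_est_def algebra_simps)
qed

context hermite_kernel
begin

lemma kernel_est_measurable:
  assumes "1/2 < H" and "T > 0" and \<theta>c: "continuous_on {0..T} \<theta>"
    and sde: "solves_sde M T x0 \<epsilon> \<theta> Z X" and "\<phi> > 0"
  shows "kernel_est G \<phi> T \<epsilon> \<theta> X WI t \<in> borel_measurable M"
proof -
  have "(\<lambda>\<omega>. integral {0..T} (\<lambda>\<tau>. (G ((\<tau> - t) / \<phi>) * \<theta> \<tau>) * X \<tau> \<omega>)) \<in> borel_measurable M"
  proof (rule measurable_integral_process[OF solves_sde_measurable(2)[OF \<open>T > 0\<close> \<theta>c sde]])
    have "(\<lambda>s. indicator {0..T} s * \<theta> s) \<in> borel_measurable borel"
      using borel_measurable_continuous_on_indicator[OF _ \<theta>c] by simp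
    then have "(\<lambda>s. G ((s - t) / \<phi>) * (indicator {0..T} s * \<theta> s)) \<in> borel_measurable borel"
      by measurable
    moreover have "(\<lambda>s. G ((s - t) / \<phi>) * (indicator {0..T} s * \<theta> s))
        = (\<lambda>s. indicator {0..T} s * (G ((s - t) / \<phi>) * \<theta> s))"
      by (simp add: fun_eq_iff mult.left_commute)
    ultimately show "(\<lambda>s. indicator {0..T} s * (G ((s - t) / \<phi>) * \<theta> s)) \<in> borel_measurable borel"
      by simp
    show "set_integrable lborel {0..T} (\<lambda>s. G ((s - t) / \<phi>) * \<theta> s * X s \<omega>)" if "\<omega> \<in> space M" for \<omega>
      using \<theta>c sde that unfolding solves_sde_def mult.assoc
      by (intro set_integrable_rescaled continuous_intros) auto
  qed auto
  moreover have "WI (\<lambda>\<tau>. G ((\<tau> - t) / \<phi>) * indicator {0..T} \<tau>) \<in> borel_measurable M"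
    using WI_borel WI_rescaled_kernel(1) assms by blast
  ultimately show ?thesis unfolding kernel_est_def[abs_def] by (simp add: mult.assoc) measurable
qed

lemma kernel_est_mse_le:
  assumes H: "1/2 < H" and T: "T > 0" and \<theta>c: "continuous_on {0..T} \<theta>"
    and \<theta>L: "\<And>\<tau>. \<tau> \<in> {0..T} \<Longrightarrow> \<bar>\<theta> \<tau>\<bar> \<le> L" and L: "L \<ge> 0"
    and sde: "solves_sde M T x0 \<epsilon> \<theta> Z X" and \<phi>: "\<phi> > 0"
    and bias: "\<bar>(1 / \<phi>) * integral {0..T} (\<lambda>\<tau>. G ((\<tau> - t) / \<phi>) * \<theta> \<tau> * det_sol x0 \<theta> \<tau>)
                 - \<theta> t * det_sol x0 \<theta> t\<bar> \<le> Bb"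
  shows "integrable M (\<lambda>\<omega>. (kernel_est G \<phi> T \<epsilon> \<theta> X WI t \<omega> - \<theta> t * det_sol x0 \<theta> t)\<^sup>2)"
    and "(\<integral>\<omega>. (kernel_est G \<phi> T \<epsilon> \<theta> X WI t \<omega> - \<theta> t * det_sol x0 \<theta> t)\<^sup>2 \<partial>M)
           \<le> 3 * (Bb\<^sup>2 + (K * L * \<epsilon>)\<^sup>2 * ((B - A) * (1 + exp (2 * L * T) * L * T))\<^sup>2 * T powr (2 * H)
                  + (\<epsilon> / \<phi>)\<^sup>2 * (2 * H * K\<^sup>2 * (B - A) powr (2 * H) * \<phi> powr (2 * H)))"
proof -
  define g where "g = (\<lambda>\<tau>. G ((\<tau> - t) / \<phi>) * indicator {0..T} \<tau>)"
  define bi where "bi = (1 / \<phi>) * integral {0..T} (\<lambda>\<tau>. G ((\<tau> - t) / \<phi>) * \<theta> \<tau> * det_sol x0 \<theta> \<tau>)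
                        - \<theta> t * det_sol x0 \<theta> t"
  define R where "R = (\<lambda>\<omega>. (1 / \<phi>) * integral {0..T}
                          (\<lambda>\<tau>. G ((\<tau> - t) / \<phi>) * (\<theta> \<tau> * (X \<tau> \<omega> - det_sol x0 \<theta> \<tau>))))"
  define N where "N = (\<lambda>\<omega>. (\<epsilon> / \<phi>) * WI g \<omega>)"
  define D where "D = (\<lambda>\<omega>. kernel_est G \<phi> T \<epsilon> \<theta> X WI t \<omega> - \<theta> t * det_sol x0 \<theta> t)"
  define Rb where "Rb = (K * L * \<epsilon>)\<^sup>2 * ((B - A) * (1 + exp (2 * L * T) * L * T))\<^sup>2 * T powr (2 * H)"
  have adm: "wiener_admissible H g"
    and WI_var: "(\<integral>\<omega>. (WI g \<omega>)\<^sup>2 \<partial>M) \<le> 2 * H * K\<^sup>2 * (B - A) powr (2 * H) * \<phi> powr (2 * H)"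
    using WI_rescaled_kernel[OF H \<phi>] by (simp_all add: g_def)
  have split: "D \<omega> = bi + R \<omega> + N \<omega>" if "\<omega> \<in> space M" for \<omega>
  proof -
    have "continuous_on {0..T} (\<lambda>s. X s \<omega>)" using sde that by (simp add: solves_sde_def)
    then show ?thesis
      unfolding D_def bi_def R_def N_def g_def by (rule kernel_est_split[OF \<theta>c])
  qed
  have Dm: "D \<in> borel_measurable M"
    using kernel_est_measurable[OF H T \<theta>c sde \<phi>] unfolding D_def by measurable
  have Nm: "N \<in> borel_measurable M" unfolding N_def using WI_borel[OF adm] by measurable
  have "(\<lambda>\<omega>. D \<omega> - bi - N \<omega>) \<in> borel_measurable M" using Dm Nm by measurable
  then have Rm: "R \<in> borel_measurable M"
    by (rule measurable_cong[THEN iffD1, rotated]) (simp add: split)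
  have RL: "(\<integral>\<^sup>+\<omega>. ennreal ((R \<omega>)\<^sup>2) \<partial>M) \<le> ennreal Rb"
    unfolding R_def Rb_def using H by (intro linearisation_error_L2[OF _ T \<theta>c \<theta>L L sde \<phi>]) auto
  have R: "integrable M (\<lambda>\<omega>. (R \<omega>)\<^sup>2)"
    using Rm RL by (intro integrableI_nonneg) (auto simp: top_unique[symmetric] intro: le_less_trans)
  have N: "integrable M (\<lambda>\<omega>. (N \<omega>)\<^sup>2)"
    unfolding N_def power_mult_distrib using integrable_WI_square[OF adm] by simp
  show "integrable M (\<lambda>\<omega>. (kernel_est G \<phi> T \<epsilon> \<theta> X WI t \<omega> - \<theta> t * det_sol x0 \<theta> t)\<^sup>2)"
    using integral_square_sum3_le(1)[OF Dm split R N] by (simp add: D_def)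
  have "bi\<^sup>2 \<le> Bb\<^sup>2" using bias abs_le_square_iff[of bi Bb] by (simp add: bi_def)
  moreover have "(\<integral>\<omega>. (R \<omega>)\<^sup>2 \<partial>M) \<le> Rb"
    using RL by (intro integral_real_bounded) (auto simp: Rb_def)
  moreover have "(\<integral>\<omega>. (N \<omega>)\<^sup>2 \<partial>M) \<le> (\<epsilon> / \<phi>)\<^sup>2 * (2 * H * K\<^sup>2 * (B - A) powr (2 * H) * \<phi> powr (2 * H))"
    unfolding N_def power_mult_distrib using WI_var by (simp add: mult_left_mono)
  ultimately have "3 * (bi\<^sup>2 + (\<integral>\<omega>. (R \<omega>)\<^sup>2 \<partial>M) + (\<integral>\<omega>. (N \<omega>)\<^sup>2 \<partial>M))
      \<le> 3 * (Bb\<^sup>2 + Rb + (\<epsilon> / \<phi>)\<^sup>2 * (2 * H * K\<^sup>2 * (B - A) powr (2 * H) * \<phi> powr (2 * H)))"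
    by simp
  with integral_square_sum3_le(2)[OF Dm split R N]
  show "(\<integral>\<omega>. (kernel_est G \<phi> T \<epsilon> \<theta> X WI t \<omega> - \<theta> t * det_sol x0 \<theta> t)\<^sup>2 \<partial>M)
      \<le> 3 * (Bb\<^sup>2 + Rb + (\<epsilon> / \<phi>)\<^sup>2 * (2 * H * K\<^sup>2 * (B - A) powr (2 * H) * \<phi> powr (2 * H)))"
    unfolding D_def by linarith
qed

end

lemma bandwidth_exponents:
  fixes \<epsilon> H :: real and k :: nat
  assumes "\<epsilon> > 0" and "H < 1"
  defines "\<phi> \<equiv> \<epsilon> powr (1 / (real k - H + 2))" and "r \<equiv> 2 * (real k + 1) / (real k + 2 - H)"
  shows "(\<phi> ^ Suc k)\<^sup>2 = \<epsilon> powr r" and "(\<epsilon> / \<phi>)\<^sup>2 * \<phi> powr (2 * H) = \<epsilon> powr r"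
proof -
  define \<rho> where "\<rho> = 1 / (real k - H + 2)"
  have kH: "real k - H + 2 > 0" using assms(2) by simp
  have \<rho>: "\<rho> * (real k - H + 2) = 1" using kH by (simp add: \<rho>_def)
  have r: "r = 2 * (\<rho> * real (Suc k))" using kH by (simp add: \<rho>_def r_def field_simps)
  have \<phi>: "\<phi> = \<epsilon> powr \<rho>" and "\<phi> > 0" using assms(1) by (simp_all add: \<phi>_def \<rho>_def)
  have "\<phi> ^ Suc k = \<epsilon> powr (\<rho> * real (Suc k))"
    using powr_realpow[OF \<open>\<phi> > 0\<close>, of "Suc k"] by (simp add: \<phi> powr_powr)
  then have "(\<phi> ^ Suc k)\<^sup>2 = \<epsilon> powr (2 * (\<rho> * real (Suc k)))"
    using assms(1) by (simp add: powr_realpow[symmetric] powr_powr mult.commute)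
  then show "(\<phi> ^ Suc k)\<^sup>2 = \<epsilon> powr r" by (simp add: r)
  have "\<epsilon> / \<phi> = \<epsilon> powr (1 - \<rho>)" using assms(1) by (simp add: \<phi> powr_diff)
  then have "(\<epsilon> / \<phi>)\<^sup>2 = \<epsilon> powr (2 - 2 * \<rho>)"
    using assms(1) by (simp add: powr_realpow[symmetric] powr_powr algebra_simps)
  moreover have "\<phi> powr (2 * H) = \<epsilon> powr (\<rho> * (2 * H))" by (simp add: \<phi> powr_powr)
  moreover have "2 - 2 * \<rho> + \<rho> * (2 * H) = r"
    using \<rho> by (simp add: r algebra_simps)
  ultimately show "(\<epsilon> / \<phi>)\<^sup>2 * \<phi> powr (2 * H) = \<epsilon> powr r" by (simp add: powr_add[symmetric])
qed


context hermite_kernel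
begin

lemma kernel_est_mse_power_le:
  fixes \<epsilon> :: real and k :: nat
  defines "\<phi> \<equiv> \<epsilon> powr (1 / (real k - H + 2))" and "r \<equiv> 2 * (real k + 1) / (real k + 2 - H)"
  assumes H: "1/2 < H" "H < 1" and T: "T > 0" and \<theta>c: "continuous_on {0..T} \<theta>"
    and \<theta>L: "\<And>\<tau>. \<tau> \<in> {0..T} \<Longrightarrow> \<bar>\<theta> \<tau>\<bar> \<le> L" and L: "L \<ge> 0"
    and sde: "solves_sde M T x0 \<epsilon> \<theta> Z X" and \<epsilon>: "0 < \<epsilon>" "\<epsilon> < 1"
    and bias: "\<bar>(1 / \<phi>) * integral {0..T} (\<lambda>\<tau>. G ((\<tau> - t) / \<phi>) * \<theta> \<tau> * det_sol x0 \<theta> \<tau>)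
                 - \<theta> t * det_sol x0 \<theta> t\<bar> \<le> Cb * \<phi> ^ Suc k"
  shows "integrable M (\<lambda>\<omega>. (kernel_est G \<phi> T \<epsilon> \<theta> X WI t \<omega> - \<theta> t * det_sol x0 \<theta> t)\<^sup>2)"
    and "(\<integral>\<omega>. (kernel_est G \<phi> T \<epsilon> \<theta> X WI t \<omega> - \<theta> t * det_sol x0 \<theta> t)\<^sup>2 \<partial>M)
           \<le> 3 * (Cb\<^sup>2 + (K * L)\<^sup>2 * ((B - A) * (1 + exp (2 * L * T) * L * T))\<^sup>2 * T powr (2 * H)
                  + 2 * H * K\<^sup>2 * (B - A) powr (2 * H)) * \<epsilon> powr r"
proof -
  define CR where "CR = (K * L)\<^sup>2 * ((B - A) * (1 + exp (2 * L * T) * L * T))\<^sup>2 * T powr (2 * H)"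
  have \<phi>: "\<phi> > 0" using \<epsilon> by (simp add: \<phi>_def)
  note mse = kernel_est_mse_le[OF H(1) T \<theta>c \<theta>L L sde \<phi> bias]
  then show "integrable M (\<lambda>\<omega>. (kernel_est G \<phi> T \<epsilon> \<theta> X WI t \<omega> - \<theta> t * det_sol x0 \<theta> t)\<^sup>2)" by blast
  have "r \<le> 2" using H by (simp add: r_def field_simps)
  then have "\<epsilon>\<^sup>2 \<le> \<epsilon> powr r" using \<epsilon> by (simp add: powr_mono' flip: powr_numeral)
  then have "CR * \<epsilon>\<^sup>2 \<le> CR * \<epsilon> powr r" by (rule mult_left_mono) (simp add: CR_def)
  moreover have "(K * L * \<epsilon>)\<^sup>2 * ((B - A) * (1 + exp (2 * L * T) * L * T))\<^sup>2 * T powr (2 * H) = CR * \<epsilon>\<^sup>2"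
    by (simp add: CR_def power_mult_distrib)
  ultimately have "(K * L * \<epsilon>)\<^sup>2 * ((B - A) * (1 + exp (2 * L * T) * L * T))\<^sup>2 * T powr (2 * H)
      \<le> CR * \<epsilon> powr r" by simp
  then show "(\<integral>\<omega>. (kernel_est G \<phi> T \<epsilon> \<theta> X WI t \<omega> - \<theta> t * det_sol x0 \<theta> t)\<^sup>2 \<partial>M)
      \<le> 3 * (Cb\<^sup>2 + CR + 2 * H * K\<^sup>2 * (B - A) powr (2 * H)) * \<epsilon> powr r"
    using mse(2) bandwidth_exponents[of \<epsilon> H k] \<epsilon> H
    by (simp add: \<phi>_def r_def power_mult_distrib algebra_simps)
qed

lemma kernel_est_mse_rate:
  assumes H: "1/2 < H" "H < 1" and T: "T > 0" and L: "L \<ge> 0" and L1: "L1 \<ge> 0"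
    and int1: "(LINT u|lborel. G u) = 1"
    and moments: "\<And>j. j \<in> {1..k} \<Longrightarrow> (LINT u|lborel. u ^ j * G u) = 0"
    and ab: "0 < a" "a \<le> b" "b < T"
  defines "r \<equiv> 2 * (real k + 1) / (real k + 2 - H)"
  shows "\<exists>C. \<forall>\<^sub>F \<epsilon> in at_right 0.
     \<forall>\<theta>\<in>Theta_class T (Suc k) L L1. \<forall>X. solves_sde M T x0 \<epsilon> \<theta> Z X \<longrightarrow> (\<forall>t\<in>{a..b}.
        integrable M (\<lambda>\<omega>. (kernel_est G (\<epsilon> powr (1 / (real k - H + 2))) T \<epsilon> \<theta> X WI t \<omega>
                            - \<theta> t * det_sol x0 \<theta> t)\<^sup>2) \<and>
        (\<integral>\<omega>. (kernel_est G (\<epsilon> powr (1 / (real k - H + 2))) T \<epsilon> \<theta> X WI t \<omega>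
               - \<theta> t * det_sol x0 \<theta> t)\<^sup>2 \<partial>M) * \<epsilon> powr (- r) \<le> C)"
proof -
  obtain Cb \<phi>0 where \<phi>0: "\<phi>0 > 0" and bias: "\<forall>\<theta>\<in>Theta_class T (Suc k) L L1. \<forall>\<phi>. 0 < \<phi> \<longrightarrow> \<phi> < \<phi>0 \<longrightarrow>
     (\<forall>t\<in>{a..b}. \<bar>(1 / \<phi>) * integral {0..T} (\<lambda>\<tau>. G ((\<tau> - t) / \<phi>) * \<theta> \<tau> * det_sol x0 \<theta> \<tau>)
                    - \<theta> t * det_sol x0 \<theta> t\<bar> \<le> Cb * \<phi> ^ Suc k)"
    using bias_bound[OF T L L1 int1 moments ab] by blast
  define \<rho> where "\<rho> = 1 / (real k - H + 2)"
  have \<rho>: "\<rho> > 0" using H by (simp add: \<rho>_def)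
  define C where "C = 3 * (Cb\<^sup>2 + (K * L)\<^sup>2 * ((B - A) * (1 + exp (2 * L * T) * L * T))\<^sup>2 * T powr (2 * H)
                           + 2 * H * K\<^sup>2 * (B - A) powr (2 * H))"
  have "min 1 (\<phi>0 powr (1 / \<rho>)) > 0" using \<phi>0 by simp
  then have "\<forall>\<^sub>F \<epsilon> in at_right 0. 0 < \<epsilon> \<and> \<epsilon> < min 1 (\<phi>0 powr (1 / \<rho>))"
    unfolding eventually_at_right_field by blast
  then show ?thesis
  proof (rule exI[of _ C, OF eventually_mono], intro ballI allI impI conjI)
    fix \<epsilon> \<theta> X t
    assume \<epsilon>: "0 < \<epsilon> \<and> \<epsilon> < min 1 (\<phi>0 powr (1 / \<rho>))" and \<theta>: "\<theta> \<in> Theta_class T (Suc k) L L1"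
      and sde: "solves_sde M T x0 \<epsilon> \<theta> Z X" and t: "t \<in> {a..b}"
    have "\<epsilon> powr \<rho> < \<phi>0"
      using \<epsilon> powr_less_mono2[OF \<rho>, of \<epsilon> "\<phi>0 powr (1 / \<rho>)"] \<phi>0 \<rho> by (auto simp: powr_powr)
    then have \<phi>: "0 < \<epsilon> powr (1 / (real k - H + 2))" "\<epsilon> powr (1 / (real k - H + 2)) < \<phi>0"
      using \<epsilon> by (simp_all add: \<rho>_def)
    have \<epsilon>1: "0 < \<epsilon>" "\<epsilon> < 1" using \<epsilon> by auto
    note mse = kernel_est_mse_power_le[OF H T Theta_class_continuous_on[OF \<theta>] Theta_class_bounded[OF \<theta>]
        L sde \<epsilon>1 bias[rule_format, OF \<theta> \<phi> t]]
    then show "integrable M (\<lambda>\<omega>. (kernel_est G (\<epsilon> powr (1 / (real k - H + 2))) T \<epsilon> \<theta> X WI t \<omega>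
                                   - \<theta> t * det_sol x0 \<theta> t)\<^sup>2)"
      by blast
    have "(\<integral>\<omega>. (kernel_est G (\<epsilon> powr (1 / (real k - H + 2))) T \<epsilon> \<theta> X WI t \<omega>
               - \<theta> t * det_sol x0 \<theta> t)\<^sup>2 \<partial>M) * \<epsilon> powr (- r) \<le> C * \<epsilon> powr r * \<epsilon> powr (- r)"
      using mse(2) by (intro mult_right_mono) (simp_all add: C_def r_def)
    also have "\<dots> = C" using \<epsilon> by (simp add: mult.assoc powr_add[symmetric])
    finally show "(\<integral>\<omega>. (kernel_est G (\<epsilon> powr (1 / (real k - H + 2))) T \<epsilon> \<theta> X WI t \<omega>
               - \<theta> t * det_sol x0 \<theta> t)\<^sup>2 \<partial>M) * \<epsilon> powr (- r) \<le> C" .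
  qed
qed

end

theorem theorem4p2:
  fixes M :: "'a measure" and Z :: "real \<Rightarrow> 'a \<Rightarrow> real"
    and WI :: "(real \<Rightarrow> real) \<Rightarrow> 'a \<Rightarrow> real"
    and T x0 L L1 H a b :: real and q k :: nat and G :: "real \<Rightarrow> real"
  assumes "T > 0" and "L > 0" and "L1 > 0" and "q \<ge> 1"
    and "1/2 < H" and "H < 1" and "k \<ge> 1"
    and "hermite_setting M H Z WI"
    and "kernel_ok k G"
    and "0 < a" and "a \<le> b" and "b < T"
  shows "\<exists>C. \<forall>\<^sub>F \<epsilon> in at_right 0.
           \<forall>\<theta>\<in>Theta_class T (k + 1) L L1. \<forall>X. solves_sde M T x0 \<epsilon> \<theta> Z X \<longrightarrow>
             (\<forall>t\<in>{a..b}.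
                integrable M (\<lambda>\<omega>. (kernel_est G (\<epsilon> powr (1 / (real k - H + 2))) T \<epsilon> \<theta> X WI t \<omega>
                                     - \<theta> t * det_sol x0 \<theta> t)\<^sup>2) \<and>
                (\<integral>\<omega>. (kernel_est G (\<epsilon> powr (1 / (real k - H + 2))) T \<epsilon> \<theta> X WI t \<omega>
                        - \<theta> t * det_sol x0 \<theta> t)\<^sup>2 \<partial>M)
                  * \<epsilon> powr (- min 2 (2 * (real k + 1) / (real k + 2 - H))) \<le> C)"
proof -
  obtain K A B where "compact_kernel G K A B" and int1: "(LINT u|lborel. G u) = 1"
    and moments: "\<And>j. j \<in> {1..k} \<Longrightarrow> (LINT u|lborel. u ^ j * G u) = 0"
    using kernel_okE[OF assms(9)] by blast
  then interpret hermite_kernel M H Z WI G K A B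
    using hermite_setting_imp_hermite_noise[OF assms(8)] by (simp add: hermite_kernel_def)
  have "min 2 (2 * (real k + 1) / (real k + 2 - H)) = 2 * (real k + 1) / (real k + 2 - H)"
    using assms(6) by (simp add: field_simps)
  then show ?thesis
    using kernel_est_mse_rate[OF assms(5,6,1) less_imp_le[OF assms(2)] less_imp_le[OF assms(3)]
        int1 moments assms(10-12), where ?x0.0 = x0]
    by simp
qed

end
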